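(* Let $\sigma\in\Sigma$. The following are equivalent: (i) $A^\sigma_W=A_W$; (ii) for every proper face $\tau$ of $\sigma$ there exists $u\in\tau^\perp_{W^*}$ with $\rho_N(u)=1$ for all $\rho\in\sigma_1\setminus\tau_1$; (iii) for every $\tau\in\Sigma$ there exists $u\in(\sigma\cap\tau)^\perp_{W^*}$ with $\rho_N(u)=1$ for all $\rho\in\sigma_1\setminus\tau_1$; (iv) $\sigma$ is $W$-regular.
   Context: Let $R\subseteq\mathbb{R}$ be a principal ideal subring. Let $V$ be a real vector space of finite dimension $n$, let $N\subseteq V$ be a lattice (a free $\mathbb{Z}$-submodule of rank $n$ spanning $V$), and let $W\subseteq V$ be the $R$-submodule generated by $N$. Put $W^*=\{u\in V^*\mid u(W)\subseteq R\}$. An $N$-fan is a finite set $\Sigma$ of sharp (containing no line) polyhedral cones in $V$, each the conic hull of a finite subset of $N$, such that every face of a cone of $\Sigma$ lies in $\Sigma$ and the intersection of two cones of $\Sigma$ is a face of each. For a cone $\sigma$ put $\sigma^\perp=\{u\in V^*\mid u(\sigma)=0\}$, $\sigma^\perp_{W^*}=\sigma^\perp\cap W^*$. Let $\Sigma_1$ be the set of rays of $\Sigma$ and $\sigma_1$ the set of rays that are faces of $\sigma$. For $\rho\in\Sigma_1$ let $\rho_N$ be the primitive generator of $N\cap\rho$, viewed as the linear form $W^*\to R$, $m\mapsto m(\rho_N)$. Let $c_W\colon W^*\to R^{\Sigma_1}$, $m\mapsto(\rho_N(m))_\rho$, let $a_W\colon R^{\Sigma_1}\to A_W$ be its cokernel,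 $\alpha_\rho=a_W(\delta_\rho)$ for the standard basis $(\delta_\rho)$, and for $\sigma\in\Sigma$ let $A^\sigma_W$ be the submodule generated by $\{\alpha_\rho\mid\rho\in\Sigma_1\setminus\sigma_1\}$. A cone $\sigma$ is $W$-regular if it is the conic hull of a subset of $W$ contained in an $R$-basis of $W$. *)

theory Defs
  imports "HOL-Analysis.Analysis"
begin

definition real_subring :: "real set \<Rightarrow> bool" where
  "real_subring R \<longleftrightarrow> 0 \<in> R \<and> 1 \<in> R \<and>
     (\<forall>x\<in>R. \<forall>y\<in>R. x + y \<in> R \<and> x - y \<in> R \<and> x * y \<in> R)"

definition ring_ideal :: "real set \<Rightarrow> real set \<Rightarrow> bool" where
  "ring_ideal R I \<longleftrightarrow> I \<subseteq> R \<and> 0 \<in> I \<and>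
     (\<forall>x\<in>I. \<forall>y\<in>I. x + y \<in> I \<and> - x \<in> I) \<and> (\<forall>r\<in>R. \<forall>x\<in>I. r * x \<in> I)"

definition principal_ideal_subring :: "real set \<Rightarrow> bool" where
  "principal_ideal_subring R \<longleftrightarrow> real_subring R \<and>
     (\<forall>I. ring_ideal R I \<longrightarrow> (\<exists>a\<in>R. I = {r * a | r. r \<in> R}))"

definition Rspan :: "real set \<Rightarrow> 'v::real_vector set \<Rightarrow> 'v set" where
  "Rspan R S = {x. \<exists>F c. finite F \<and> F \<subseteq> S \<and> (\<forall>v\<in>F. c v \<in> R) \<and> x = (\<Sum>v\<in>F. c v *\<^sub>R v)}"

definition R_independent :: "real set \<Rightarrow> 'v::real_vector set \<Rightarrow> bool" where
  "R_independent R B \<longleftrightarrow> (\<forall>F c. finite F \<and> F \<subseteq> B \<and> (\<forall>v\<in>F. c v \<in> R) \<and>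
      (\<Sum>v\<in>F. c v *\<^sub>R v) = 0 \<longrightarrow> (\<forall>v\<in>F. c v = 0))"

definition R_basis :: "real set \<Rightarrow> 'v::real_vector set \<Rightarrow> 'v set \<Rightarrow> bool" where
  "R_basis R W B \<longleftrightarrow> B \<subseteq> W \<and> R_independent R B \<and> Rspan R B = W"

definition is_lattice :: "'v::euclidean_space set \<Rightarrow> bool" where
  "is_lattice N \<longleftrightarrow> (\<exists>B. finite B \<and> card B = DIM('v) \<and> span B = UNIV \<and>
      N = {x. \<exists>k::'v \<Rightarrow> int. x = (\<Sum>b\<in>B. of_int (k b) *\<^sub>R b)})"

definition dual_W :: "real set \<Rightarrow> 'v::real_vector set \<Rightarrow> ('v \<Rightarrow> real) set" where
  "dual_W R W = {u. linear u \<and> (\<forall>w\<in>W. u w \<in> R)}"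

definition conic_hull :: "'v::real_vector set \<Rightarrow> 'v set" where
  "conic_hull S = {x. \<exists>F c. finite F \<and> F \<subseteq> S \<and> (\<forall>v\<in>F. c v \<ge> 0) \<and> x = (\<Sum>v\<in>F. c v *\<^sub>R v)}"

definition sharp :: "'v::real_vector set \<Rightarrow> bool" where
  "sharp \<sigma> \<longleftrightarrow> (\<forall>x. x \<in> \<sigma> \<and> - x \<in> \<sigma> \<longrightarrow> x = 0)"

definition N_cone :: "'v::real_vector set \<Rightarrow> 'v set \<Rightarrow> bool" where
  "N_cone N \<sigma> \<longleftrightarrow> sharp \<sigma> \<and> (\<exists>S. finite S \<and> S \<subseteq> N \<and> \<sigma> = conic_hull S)"

definition cone_face :: "'v::real_vector set \<Rightarrow> 'v set \<Rightarrow> bool" where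
  "cone_face \<tau> \<sigma> \<longleftrightarrow> (\<exists>u::'v \<Rightarrow> real. linear u \<and> (\<forall>x\<in>\<sigma>. u x \<ge> 0) \<and> \<tau> = {x\<in>\<sigma>. u x = 0})"

definition N_fan :: "'v::real_vector set \<Rightarrow> 'v set set \<Rightarrow> bool" where
  "N_fan N \<Sigma> \<longleftrightarrow> finite \<Sigma> \<and> (\<forall>\<sigma>\<in>\<Sigma>. N_cone N \<sigma>) \<and>
     (\<forall>\<sigma>\<in>\<Sigma>. \<forall>\<tau>. cone_face \<tau> \<sigma> \<longrightarrow> \<tau> \<in> \<Sigma>) \<and>
     (\<forall>\<sigma>\<in>\<Sigma>. \<forall>\<tau>\<in>\<Sigma>. cone_face (\<sigma> \<inter> \<tau>) \<sigma> \<and> cone_face (\<sigma> \<inter> \<tau>) \<tau>)"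

definition is_ray :: "'v::real_vector set \<Rightarrow> bool" where
  "is_ray \<rho> \<longleftrightarrow> (\<exists>v. v \<noteq> 0 \<and> \<rho> = {c *\<^sub>R v | c. c \<ge> 0})"

definition fan_rays :: "'v::real_vector set set \<Rightarrow> 'v set set" where
  "fan_rays \<Sigma> = {\<rho>\<in>\<Sigma>. is_ray \<rho>}"

definition cone_rays :: "'v::real_vector set \<Rightarrow> 'v set set" where
  "cone_rays \<sigma> = {\<rho>. is_ray \<rho> \<and> cone_face \<rho> \<sigma>}"

definition prim_gen :: "'v::real_vector set \<Rightarrow> 'v set \<Rightarrow> 'v" where
  "prim_gen N \<rho> = (THE v. v \<in> N \<inter> \<rho> \<and> v \<noteq> 0 \<and> (\<forall>w\<in>N \<inter> \<rho>. \<exists>k::nat. w = of_nat k *\<^sub>R v))"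

definition perp :: "'v::real_vector set \<Rightarrow> ('v \<Rightarrow> real) set" where
  "perp \<sigma> = {u. linear u \<and> (\<forall>x\<in>\<sigma>. u x = 0)}"

text \<open>R^{Sigma_1}, realised as functions on cones, R-valued, zero off Sigma_1.\<close>
definition R_Sigma1 :: "real set \<Rightarrow> 'v::real_vector set set \<Rightarrow> ('v set \<Rightarrow> real) set" where
  "R_Sigma1 R \<Sigma> = {x. (\<forall>\<rho>. x \<rho> \<in> R) \<and> (\<forall>\<rho>. \<rho> \<notin> fan_rays \<Sigma> \<longrightarrow> x \<rho> = 0)}"

definition c_W :: "'v::real_vector set \<Rightarrow> 'v set set \<Rightarrow> ('v \<Rightarrow> real) \<Rightarrow> ('v set \<Rightarrow> real)" where
  "c_W N \<Sigma> m = (\<lambda>\<rho>. if \<rho> \<in> fan_rays \<Sigma> then m (prim_gen N \<rho>) else 0)"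

text \<open>The cokernel map a_W : R^{Sigma_1} \<rightarrow> A_W, elements of A_W being cosets
  modulo the image of c_W.\<close>
definition a_W :: "real set \<Rightarrow> 'v::real_vector set \<Rightarrow> 'v set set \<Rightarrow> ('v set \<Rightarrow> real) \<Rightarrow> ('v set \<Rightarrow> real) set" where
  "a_W R N \<Sigma> x = {y \<in> R_Sigma1 R \<Sigma>. x - y \<in> c_W N \<Sigma> ` dual_W R (Rspan R N)}"

definition A_W :: "real set \<Rightarrow> 'v::real_vector set \<Rightarrow> 'v set set \<Rightarrow> ('v set \<Rightarrow> real) set set" where
  "A_W R N \<Sigma> = a_W R N \<Sigma> ` R_Sigma1 R \<Sigma>"

text \<open>A^sigma_W: submodule generated by alpha_rho, rho in Sigma_1 - sigma_1; as a_W is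
  R-linear this is the image under a_W of the R-span of the delta_rho.\<close>
definition A_W_sigma :: "real set \<Rightarrow> 'v::real_vector set \<Rightarrow> 'v set set \<Rightarrow> 'v set \<Rightarrow> ('v set \<Rightarrow> real) set set" where
  "A_W_sigma R N \<Sigma> \<sigma> = a_W R N \<Sigma> `
     {y \<in> R_Sigma1 R \<Sigma>. \<forall>\<rho>. \<rho> \<in> cone_rays \<sigma> \<longrightarrow> y \<rho> = 0}"

definition W_regular :: "real set \<Rightarrow> 'v::real_vector set \<Rightarrow> 'v set \<Rightarrow> bool" where
  "W_regular R W \<sigma> \<longleftrightarrow> (\<exists>S B. S \<subseteq> B \<and> R_basis R W B \<and> \<sigma> = conic_hull S)"

end

theory Submission
  imports Defs
begin

text \<open>All four conditions are equivalent to the existence of forms in W* dual to the primitive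
  generators of the rays of \<sigma>. For (i) this is read off the cokernel: the class of a vector of
  R^\<Sigma>1 supported on the rays of \<sigma> has a representative supported off them exactly when its
  values on those rays are taken by some form of W*. For (ii) and (iii), the dual forms sum to the
  required separating forms, using that rays of \<sigma> lying in another cone \<tau> of the fan are faces
  of \<tau>; conversely the forms for the zero face and for the ray faces differ by a dual form. A
  basis of W containing generators of \<sigma> yields dual forms by taking coordinates and rescaling,
  which is possible because a primitive lattice vector has content one; conversely, since R is a
  principal ideal ring, the common kernel of the dual forms in W is free, and together with the
  primitive generators its basis forms a basis of W.\<close>

section \<open>Linear combinations with restricted coefficients\<close>

definition restricted_span :: "(real \<Rightarrow> bool) \<Rightarrow> 'a::real_vector set \<Rightarrow> 'a set" where
  "restricted_span P S =
     {x. \<exists>F c. finite F \<and> F \<subseteq> S \<and> (\<forall>v\<in>F. P (c v)) \<and> x = (\<Sum>v\<in>F. c v *\<^sub>R v)}"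

lemma conic_hull_eq_restricted_span: "conic_hull S = restricted_span (\<lambda>c. c \<ge> 0) S"
  unfolding conic_hull_def restricted_span_def ..

lemma Rspan_eq_restricted_span: "Rspan R S = restricted_span (\<lambda>c. c \<in> R) S"
  unfolding Rspan_def restricted_span_def ..

lemma restricted_spanI:
  assumes "finite F" "F \<subseteq> S" "\<forall>v\<in>F. P (c v)"
  shows "(\<Sum>v\<in>F. c v *\<^sub>R v) \<in> restricted_span P S"
  unfolding restricted_span_def using assms by blast

lemma restricted_spanE:
  assumes "x \<in> restricted_span P S"
  obtains F c where "finite F" "F \<subseteq> S" "\<forall>v\<in>F. P (c v)" "x = (\<Sum>v\<in>F. c v *\<^sub>R v)"
  using assms unfolding restricted_span_def by blast

lemma restricted_span_0: "0 \<in> restricted_span P S"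
  using restricted_spanI[of "{}" S P] by simp

lemma restricted_span_inc: "P 1 \<Longrightarrow> v \<in> S \<Longrightarrow> v \<in> restricted_span P S"
  using restricted_spanI[of "{v}" S P "\<lambda>_. 1"] by simp

lemma restricted_span_add:
  assumes P0: "P 0" and P_add: "\<And>a b. P a \<Longrightarrow> P b \<Longrightarrow> P (a + b)"
    and "x \<in> restricted_span P S" "y \<in> restricted_span P S"
  shows "x + y \<in> restricted_span P S"
proof -
  obtain F c where F: "finite F" "F \<subseteq> S" "\<forall>v\<in>F. P (c v)" "x = (\<Sum>v\<in>F. c v *\<^sub>R v)"
    using assms(3) by (rule restricted_spanE)
  obtain G d where G: "finite G" "G \<subseteq> S" "\<forall>v\<in>G. P (d v)" "y = (\<Sum>v\<in>G. d v *\<^sub>R v)"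
    using assms(4) by (rule restricted_spanE)
  define c' where "c' v = (if v \<in> F then c v else 0)" for v
  define d' where "d' v = (if v \<in> G then d v else 0)" for v
  have "x = (\<Sum>v\<in>F \<union> G. c' v *\<^sub>R v)" "y = (\<Sum>v\<in>F \<union> G. d' v *\<^sub>R v)"
    unfolding F(4) G(4) c'_def d'_def using F(1) G(1)
    by (intro sum.mono_neutral_cong_right[symmetric]; auto)+
  then have "x + y = (\<Sum>v\<in>F \<union> G. (c' v + d' v) *\<^sub>R v)"
    by (simp add: scaleR_add_left sum.distrib)
  moreover have "\<forall>v\<in>F \<union> G. P (c' v + d' v)"
    using F(3) G(3) by (auto simp: c'_def d'_def P0 P_add)
  ultimately show ?thesis
    using F(1,2) G(1,2) restricted_spanI[of "F \<union> G" S P] by simp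
qed

lemma restricted_span_scaleR:
  assumes "\<And>b. P b \<Longrightarrow> P (a * b)" "x \<in> restricted_span P S"
  shows "a *\<^sub>R x \<in> restricted_span P S"
proof -
  obtain F c where F: "finite F" "F \<subseteq> S" "\<forall>v\<in>F. P (c v)" "x = (\<Sum>v\<in>F. c v *\<^sub>R v)"
    using assms(2) by (rule restricted_spanE)
  then have "a *\<^sub>R x = (\<Sum>v\<in>F. (a * c v) *\<^sub>R v)"
    by (simp add: scaleR_sum_right)
  then show ?thesis
    using F(1-3) assms(1) restricted_spanI[of F S P "\<lambda>v. a * c v"] by simp
qed

lemma restricted_span_minimal:
  assumes "0 \<in> C" "\<And>x y. x \<in> C \<Longrightarrow> y \<in> C \<Longrightarrow> x + y \<in> C"
    and "\<And>x a. x \<in> C \<Longrightarrow> P a \<Longrightarrow> a *\<^sub>R x \<in> C" "S \<subseteq> C"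
  shows "restricted_span P S \<subseteq> C"
proof
  fix x assume "x \<in> restricted_span P S"
  then obtain F c where F: "finite F" "F \<subseteq> S" "\<forall>v\<in>F. P (c v)" "x = (\<Sum>v\<in>F. c v *\<^sub>R v)"
    by (rule restricted_spanE)
  have "\<forall>v\<in>F. c v *\<^sub>R v \<in> C"
    using F(2,3) assms(3,4) by blast
  with F(1) have "(\<Sum>v\<in>F. c v *\<^sub>R v) \<in> C"
    by (induction F rule: finite_induct) (auto simp: assms(1,2))
  then show "x \<in> C" using F(4) by simp
qed

lemma restricted_span_mono: "S \<subseteq> T \<Longrightarrow> restricted_span P S \<subseteq> restricted_span P T"
  unfolding restricted_span_def by blast

section \<open>Conic hulls and faces\<close>

lemma conic_hull_0: "0 \<in> conic_hull S"
  by (simp add: conic_hull_eq_restricted_span restricted_span_0)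

lemma conic_hull_inc: "v \<in> S \<Longrightarrow> v \<in> conic_hull S"
  by (simp add: conic_hull_eq_restricted_span restricted_span_inc)

lemma conic_hull_add: "x \<in> conic_hull S \<Longrightarrow> y \<in> conic_hull S \<Longrightarrow> x + y \<in> conic_hull S"
  unfolding conic_hull_eq_restricted_span by (rule restricted_span_add) auto

lemma conic_hull_scaleR: "x \<in> conic_hull S \<Longrightarrow> a \<ge> 0 \<Longrightarrow> a *\<^sub>R x \<in> conic_hull S"
  unfolding conic_hull_eq_restricted_span by (rule restricted_span_scaleR) auto

lemma conic_hull_minimal:
  assumes "0 \<in> C" "\<And>x y. x \<in> C \<Longrightarrow> y \<in> C \<Longrightarrow> x + y \<in> C"
    and "\<And>x a. x \<in> C \<Longrightarrow> a \<ge> 0 \<Longrightarrow> a *\<^sub>R x \<in> C" "S \<subseteq> C"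
  shows "conic_hull S \<subseteq> C"
  unfolding conic_hull_eq_restricted_span using assms by (rule restricted_span_minimal)

lemma conic_hull_subset_conic_hull: "S \<subseteq> conic_hull T \<Longrightarrow> conic_hull S \<subseteq> conic_hull T"
  by (rule conic_hull_minimal) (auto simp: conic_hull_0 conic_hull_add conic_hull_scaleR)

lemma conic_hull_subset_zero: "S \<subseteq> {0} \<Longrightarrow> conic_hull S \<subseteq> {0}"
  by (rule conic_hull_minimal) auto

lemma convex_conic_hull: "convex (conic_hull S)"
  unfolding convex_def by (auto intro!: conic_hull_add conic_hull_scaleR)

lemma linear_conic_hull_nonneg:
  fixes u :: "'a::real_vector \<Rightarrow> real"
  assumes "linear u" "\<And>s. s \<in> S \<Longrightarrow> u s \<ge> 0" "x \<in> conic_hull S"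
  shows "u x \<ge> 0"
proof -
  have "conic_hull S \<subseteq> {x. u x \<ge> 0}"
    by (rule conic_hull_minimal) (use assms in \<open>auto simp: linear_0 linear_add linear_scale\<close>)
  then show ?thesis using assms(3) by blast
qed

lemma linear_conic_hull_zero:
  fixes u :: "'a::real_vector \<Rightarrow> real"
  assumes "linear u" "\<And>s. s \<in> S \<Longrightarrow> u s = 0" "x \<in> conic_hull S"
  shows "u x = 0"
proof -
  have "conic_hull S \<subseteq> {x. u x = 0}"
    by (rule conic_hull_minimal) (use assms in \<open>auto simp: linear_0 linear_add linear_scale\<close>)
  then show ?thesis using assms(3) by blast
qed

lemma conic_hull_kernel:
  fixes u :: "'a::real_vector \<Rightarrow> real"
  assumes "linear u" "\<And>s. s \<in> S \<Longrightarrow> u s \<ge> 0" "x \<in> conic_hull S" "u x = 0"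
  shows "x \<in> conic_hull {s\<in>S. u s = 0}"
proof -
  obtain F c where F: "finite F" "F \<subseteq> S" "\<forall>v\<in>F. c v \<ge> 0" "x = (\<Sum>v\<in>F. c v *\<^sub>R v)"
    using assms(3) unfolding conic_hull_eq_restricted_span by (rule restricted_spanE)
  have "(\<Sum>v\<in>F. c v * u v) = 0"
    using assms(1,4) F(4) by (simp add: linear_sum linear_scale)
  moreover have "\<forall>v\<in>F. c v * u v \<ge> 0"
    using F(2,3) assms(2) by auto
  ultimately have zero: "\<forall>v\<in>F. c v * u v = 0"
    using sum_nonneg_eq_0_iff[OF F(1), of "\<lambda>v. c v * u v"] by simp
  define F' where "F' = {v\<in>F. c v \<noteq> 0}"
  have "x = (\<Sum>v\<in>F'. c v *\<^sub>R v)"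
    unfolding F(4) F'_def using F(1) by (intro sum.mono_neutral_right) auto
  moreover have "(\<Sum>v\<in>F'. c v *\<^sub>R v) \<in> conic_hull {s\<in>S. u s = 0}"
    unfolding conic_hull_eq_restricted_span
    by (rule restricted_spanI) (use zero F(1-3) in \<open>auto simp: F'_def\<close>)
  ultimately show ?thesis by simp
qed

lemma conic_hull_face_eq:
  fixes u :: "'a::real_vector \<Rightarrow> real"
  assumes "linear u" "\<forall>x\<in>conic_hull X. u x \<ge> 0"
  shows "{x\<in>conic_hull X. u x = 0} = conic_hull {e\<in>X. u e = 0}"
proof
  have "\<And>s. s \<in> X \<Longrightarrow> u s \<ge> 0"
    using assms(2) conic_hull_inc by blast
  then show "{x\<in>conic_hull X. u x = 0} \<subseteq> conic_hull {e\<in>X. u e = 0}"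
    using conic_hull_kernel[OF assms(1)] by (simp add: subset_iff)
  have "conic_hull {e\<in>X. u e = 0} \<subseteq> conic_hull X"
    by (rule conic_hull_subset_conic_hull) (simp add: conic_hull_inc subset_iff)
  moreover have "u x = 0" if "x \<in> conic_hull {e\<in>X. u e = 0}" for x
    by (rule linear_conic_hull_zero[OF assms(1) _ that]) simp
  ultimately show "conic_hull {e\<in>X. u e = 0} \<subseteq> {x\<in>conic_hull X. u x = 0}"
    by blast
qed

lemma cone_face_refl: "cone_face X X"
  unfolding cone_face_def by (rule exI[of _ "\<lambda>x. 0"]) (simp add: linear_zero)

lemma cone_face_subset: "cone_face \<tau> \<sigma> \<Longrightarrow> \<tau> \<subseteq> \<sigma>"
  unfolding cone_face_def by blast

lemma cone_face_of_subset:
  assumes "cone_face \<rho> \<sigma>" "\<rho> \<subseteq> \<tau>" "\<tau> \<subseteq> \<sigma>"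
  shows "cone_face \<rho> \<tau>"
  using assms unfolding cone_face_def by blast

text \<open>Add to the form exposing \<rho> in \<sigma> a multiple of the form exposing \<sigma> in \<tau> large enough
  to make it positive on the generators of \<tau> outside \<sigma>.\<close>
lemma cone_face_trans:
  fixes \<tau> :: "'a::real_vector set"
  assumes "cone_face \<rho> \<sigma>" "cone_face \<sigma> \<tau>" "\<tau> = conic_hull H" "finite H"
  shows "cone_face \<rho> \<tau>"
proof -
  obtain u :: "'a \<Rightarrow> real" where u: "linear u" "\<forall>x\<in>\<sigma>. u x \<ge> 0" "\<rho> = {x\<in>\<sigma>. u x = 0}"
    using assms(1) unfolding cone_face_def by blast
  obtain w :: "'a \<Rightarrow> real" where w: "linear w" "\<forall>x\<in>\<tau>. w x \<ge> 0" "\<sigma> = {x\<in>\<tau>. w x = 0}"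
    using assms(2) unfolding cone_face_def by blast
  define H' where "H' = {h\<in>H. w h > 0}"
  define t where "t = 1 + (\<Sum>h\<in>H'. \<bar>u h\<bar> / w h)"
  define f where "f x = u x + t * w x" for x
  have lf: "linear f"
    unfolding f_def using linear_compose_add[OF u(1) linear_compose_scale_right[OF w(1), of t]] by simp
  have wH: "w h \<ge> 0" if "h \<in> H" for h
    using w(2) conic_hull_inc[OF that] assms(3) by blast
  have f_pos: "f h > 0" if "h \<in> H" "w h > 0" for h
  proof -
    have "\<bar>u h\<bar> / w h \<le> (\<Sum>h\<in>H'. \<bar>u h\<bar> / w h)"
      using that assms(4) by (intro member_le_sum) (auto simp: H'_def)
    then have "(1 + \<bar>u h\<bar> / w h) * w h \<le> t * w h"
      using that(2) unfolding t_def by (intro mult_right_mono) auto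
    moreover have "(1 + \<bar>u h\<bar> / w h) * w h = w h + \<bar>u h\<bar>"
      using that(2) by (simp add: field_simps)
    ultimately show ?thesis unfolding f_def using that(2) by linarith
  qed
  have in_\<sigma>: "h \<in> \<sigma>" if "h \<in> H" "\<not> w h > 0" for h
    using that wH w(3) conic_hull_inc[of h H] assms(3) by force
  have fH: "f h \<ge> 0" if "h \<in> H" for h
    using f_pos[OF that] in_\<sigma>[OF that] u(2) w(3) by (force simp: f_def)
  have f_nonneg: "\<forall>x\<in>\<tau>. f x \<ge> 0"
    using linear_conic_hull_nonneg[OF lf fH] assms(3) by blast
  have "\<rho> \<subseteq> {x\<in>\<tau>. f x = 0}"
    using u(3) w(3) by (auto simp: f_def)
  moreover have "conic_hull {h\<in>H. f h = 0} \<subseteq> \<rho>"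
  proof
    fix x assume x: "x \<in> conic_hull {h\<in>H. f h = 0}"
    have kernel: "w h = 0" "u h = 0" if "h \<in> {h\<in>H. f h = 0}" for h
      using that f_pos wH[of h] by (force simp: f_def)+
    have "x \<in> \<tau>"
      using x assms(3) conic_hull_subset_conic_hull[of "{h\<in>H. f h = 0}" H]
      by (auto intro: conic_hull_inc)
    moreover have "w x = 0" "u x = 0"
      using linear_conic_hull_zero[OF w(1) _ x] linear_conic_hull_zero[OF u(1) _ x] kernel by auto
    ultimately show "x \<in> \<rho>" using u(3) w(3) by blast
  qed
  ultimately have "\<rho> = {x\<in>\<tau>. f x = 0}"
    using conic_hull_face_eq[OF lf, of H] f_nonneg assms(3) by blast
  then show ?thesis unfolding cone_face_def using lf f_nonneg by blast
qed

section \<open>Rays and sharp cones\<close>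

definition ray_of :: "'a::real_vector \<Rightarrow> 'a set" where
  "ray_of v = {c *\<^sub>R v | c. c \<ge> 0}"

lemma ray_ofI: "c \<ge> 0 \<Longrightarrow> c *\<^sub>R v \<in> ray_of v"
  unfolding ray_of_def by blast

lemma ray_of_self: "v \<in> ray_of v"
  using ray_ofI[of 1 v] by simp

lemma ray_ofE:
  assumes "x \<in> ray_of v"
  obtains c where "c \<ge> 0" "x = c *\<^sub>R v"
  using assms unfolding ray_of_def by blast

lemma ray_of_nonzero_mem:
  assumes "e \<in> ray_of v" "e \<noteq> 0"
  shows "ray_of e = ray_of v"
proof -
  obtain c where c: "c \<ge> 0" "e = c *\<^sub>R v"
    using assms(1) by (rule ray_ofE)
  with assms(2) have "c > 0" by auto
  show ?thesis
  proof (intro equalityI subsetI)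
    fix x assume "x \<in> ray_of e"
    then obtain a where "a \<ge> 0" "x = (a * c) *\<^sub>R v"
      using c(2) by (auto elim: ray_ofE)
    then show "x \<in> ray_of v" using \<open>c > 0\<close> by (simp add: ray_ofI)
  next
    fix x assume "x \<in> ray_of v"
    then obtain a where "a \<ge> 0" "x = (a / c) *\<^sub>R e"
      using c(2) \<open>c > 0\<close> by (auto elim: ray_ofE)
    then show "x \<in> ray_of e" using \<open>c > 0\<close> by (simp add: ray_ofI)
  qed
qed

lemma is_ray_iff: "is_ray \<rho> \<longleftrightarrow> (\<exists>v. v \<noteq> 0 \<and> \<rho> = ray_of v)"
  unfolding is_ray_def ray_of_def ..

lemma is_ray_ray_of: "v \<noteq> 0 \<Longrightarrow> is_ray (ray_of v)"
  using is_ray_iff by blast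

lemma ray_eq_if_subset:
  assumes "is_ray \<rho>" "\<rho> \<subseteq> ray_of p"
  shows "\<rho> = ray_of p"
  using assms ray_of_self ray_of_nonzero_mem unfolding is_ray_iff by blast

lemma rays_eq_if_subset: "is_ray \<rho> \<Longrightarrow> is_ray \<rho>' \<Longrightarrow> \<rho> \<subseteq> \<rho>' \<Longrightarrow> \<rho> = \<rho>'"
  using ray_eq_if_subset unfolding is_ray_iff by blast

lemma cone_rays_zero: "cone_rays {0} = {}"
  using ray_of_self cone_face_subset unfolding cone_rays_def is_ray_iff by fastforce

lemma ray_of_subset_conic_hull: "x \<in> conic_hull X \<Longrightarrow> ray_of x \<subseteq> conic_hull X"
  by (auto elim!: ray_ofE intro: conic_hull_scaleR)

lemma ray_face_of_conic_hull:
  fixes X :: "'a::real_vector set"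
  assumes "cone_face \<rho> (conic_hull X)" "is_ray \<rho>"
  obtains x where "x \<in> X" "x \<noteq> 0" "\<rho> = ray_of x"
proof -
  obtain w :: "'a \<Rightarrow> real" where w: "linear w" "\<forall>x\<in>conic_hull X. w x \<ge> 0"
    "\<rho> = {x\<in>conic_hull X. w x = 0}"
    using assms(1) unfolding cone_face_def by blast
  obtain v where v: "v \<noteq> 0" "\<rho> = ray_of v"
    using assms(2) unfolding is_ray_iff by blast
  have \<rho>_eq: "\<rho> = conic_hull {e\<in>X. w e = 0}"
    using w conic_hull_face_eq by blast
  have "\<not> {e\<in>X. w e = 0} \<subseteq> {0}"
    using conic_hull_subset_zero \<rho>_eq v ray_of_self by blast
  then obtain x where x: "x \<in> X" "w x = 0" "x \<noteq> 0" by blast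
  then have "x \<in> \<rho>"
    using \<rho>_eq conic_hull_inc[of x "{e\<in>X. w e = 0}"] by blast
  then show thesis
    using that x v ray_of_nonzero_mem by blast
qed

lemma zero_notin_convex_hull_if_sharp:
  fixes S :: "'a::real_vector set"
  assumes "finite S" "sharp (conic_hull S)"
  shows "0 \<notin> convex hull (S - {0})"
proof
  assume "0 \<in> convex hull (S - {0})"
  then obtain w where w: "\<forall>x\<in>S - {0}. 0 \<le> w x" "sum w (S - {0}) = 1"
    "(\<Sum>x\<in>S - {0}. w x *\<^sub>R x) = 0"
    using convex_hull_finite[of "S - {0}"] assms(1) by auto
  obtain s where s: "s \<in> S - {0}" "w s \<noteq> 0"
    using w(2) by (metis sum.neutral zero_neq_one)
  with w(1) have "w s > 0" by force
  have "w s *\<^sub>R s + (\<Sum>x\<in>S - {0} - {s}. w x *\<^sub>R x) = 0"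
    using w(3) sum.remove[of "S - {0}" s "\<lambda>x. w x *\<^sub>R x"] assms(1) s(1) by simp
  then have "(\<Sum>x\<in>S - {0} - {s}. w x *\<^sub>R x) = - (w s *\<^sub>R s)"
    by (simp add: eq_neg_iff_add_eq_0 add.commute)
  then have "- s = (1 / w s) *\<^sub>R (\<Sum>x\<in>S - {0} - {s}. w x *\<^sub>R x)"
    using \<open>w s > 0\<close> by simp
  moreover have "(\<Sum>x\<in>S - {0} - {s}. w x *\<^sub>R x) \<in> conic_hull S"
    unfolding conic_hull_eq_restricted_span
    by (rule restricted_spanI) (use assms(1) w(1) in auto)
  ultimately have "- s \<in> conic_hull S"
    using conic_hull_scaleR[of _ S "1 / w s"] \<open>w s > 0\<close> by simp
  moreover have "s \<in> conic_hull S"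
    using s(1) conic_hull_inc by blast
  ultimately show False
    using assms(2) s(1) unfolding sharp_def by blast
qed

text \<open>Use a hyperplane separating 0 from the convex hull of the nonzero generators.\<close>
lemma sharp_conic_hull_positive_form:
  fixes S :: "'a::euclidean_space set"
  assumes "finite S" "sharp (conic_hull S)"
  obtains u :: "'a \<Rightarrow> real"
  where "linear u" "\<And>x. x \<in> conic_hull S \<Longrightarrow> x \<noteq> 0 \<Longrightarrow> u x > 0"
proof -
  have "closed (convex hull (S - {0}))"
    using assms(1) by (simp add: compact_imp_closed finite_imp_compact_convex_hull)
  then obtain a b where ab: "0 < b" "\<forall>x\<in>convex hull (S - {0}). a \<bullet> x > b"
    using separating_hyperplane_closed_0 zero_notin_convex_hull_if_sharp[OF assms] by blast
  have lin: "linear (\<lambda>x. a \<bullet> x)"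
    by (simp add: bounded_linear.linear bounded_linear_inner_right)
  have pos: "a \<bullet> s > 0" if "s \<in> S - {0}" for s
    using ab hull_subset[of "S - {0}" convex] that by force
  then have nonneg: "\<And>s. s \<in> S \<Longrightarrow> a \<bullet> s \<ge> 0"
    by (metis Diff_iff inner_zero_right less_le singletonD order_refl)
  show thesis
  proof (rule that[OF lin])
    fix x assume x: "x \<in> conic_hull S" "x \<noteq> 0"
    show "a \<bullet> x > 0"
    proof (rule ccontr)
      assume "\<not> a \<bullet> x > 0"
      then have "a \<bullet> x = 0"
        using linear_conic_hull_nonneg[OF lin nonneg x(1)] by simp
      then have "x \<in> conic_hull {s\<in>S. a \<bullet> s = 0}"
        using conic_hull_kernel[OF lin nonneg x(1)] by blast
      moreover have "{s\<in>S. a \<bullet> s = 0} \<subseteq> {0}"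
        using pos by force
      ultimately show False
        using conic_hull_subset_zero x(2) by blast
    qed
  qed
qed

lemma cone_face_zero:
  fixes S :: "'a::euclidean_space set"
  assumes "finite S" "sharp (conic_hull S)"
  shows "cone_face {0} (conic_hull S)"
proof -
  obtain u :: "'a \<Rightarrow> real" where u: "linear u" "\<And>x. x \<in> conic_hull S \<Longrightarrow> x \<noteq> 0 \<Longrightarrow> u x > 0"
    using sharp_conic_hull_positive_form[OF assms] by blast
  have "{0} = {x\<in>conic_hull S. u x = 0}" "\<forall>x\<in>conic_hull S. u x \<ge> 0"
    using u conic_hull_0 linear_0[OF u(1)] by (force, metis less_le order_refl)
  then show ?thesis unfolding cone_face_def using u(1) by blast
qed

lemma conic_hull_Diff_0: "conic_hull (S - {0}) = conic_hull S"
proof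
  show "conic_hull (S - {0}) \<subseteq> conic_hull S"
    by (rule conic_hull_subset_conic_hull) (auto intro: conic_hull_inc)
  show "conic_hull S \<subseteq> conic_hull (S - {0})"
    by (rule conic_hull_subset_conic_hull) (auto intro: conic_hull_inc conic_hull_0)
qed

lemma normalized_mem_convex_hull:
  fixes u :: "'a::real_vector \<Rightarrow> real"
  assumes "linear u" "\<And>s. s \<in> S \<Longrightarrow> u s > 0" "x \<in> conic_hull S" "u x > 0"
  shows "(1 / u x) *\<^sub>R x \<in> convex hull ((\<lambda>s. (1 / u s) *\<^sub>R s) ` S)"
proof -
  obtain F c where F: "finite F" "F \<subseteq> S" "\<forall>v\<in>F. c v \<ge> 0" "x = (\<Sum>v\<in>F. c v *\<^sub>R v)"
    using assms(3) unfolding conic_hull_eq_restricted_span by (rule restricted_spanE)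
  have uF: "u v > 0" if "v \<in> F" for v
    using assms(2) F(2) that by blast
  have ux: "u x = (\<Sum>v\<in>F. c v * u v)"
    using assms(1) F(4) by (simp add: linear_sum linear_scale)
  have "(\<Sum>v\<in>F. (c v * u v / u x) *\<^sub>R ((1 / u v) *\<^sub>R v))
      \<in> convex hull ((\<lambda>s. (1 / u s) *\<^sub>R s) ` S)"
  proof (rule convex_sum[OF F(1) convex_convex_hull])
    show "(\<Sum>v\<in>F. c v * u v / u x) = 1"
      using ux assms(4) by (simp add: sum_divide_distrib[symmetric])
    show "0 \<le> c v * u v / u x" if "v \<in> F" for v
      using F(3) uF[OF that] assms(4) that by simp
    show "(1 / u v) *\<^sub>R v \<in> convex hull ((\<lambda>s. (1 / u s) *\<^sub>R s) ` S)" if "v \<in> F" for v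
      using F(2) that by (intro hull_inc) blast
  qed
  moreover have "(\<Sum>v\<in>F. (c v * u v / u x) *\<^sub>R ((1 / u v) *\<^sub>R v))
      = (1 / u x) *\<^sub>R (\<Sum>v\<in>F. c v *\<^sub>R v)"
    unfolding scaleR_sum_right
  proof (rule sum.cong[OF refl])
    fix v assume "v \<in> F"
    then have "u v \<noteq> 0" using uF by force
    then show "(c v * u v / u x) *\<^sub>R ((1 / u v) *\<^sub>R v) = (1 / u x) *\<^sub>R c v *\<^sub>R v"
      by simp
  qed
  ultimately show ?thesis using F(4) by simp
qed

lemma extreme_point_ray_face:
  fixes u :: "'a::euclidean_space \<Rightarrow> real"
  assumes u: "linear u" "\<And>x. x \<in> conic_hull S \<Longrightarrow> x \<noteq> 0 \<Longrightarrow> u x > 0"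
    and slice: "\<And>x. x \<in> conic_hull S \<Longrightarrow> x \<noteq> 0 \<Longrightarrow> (1 / u x) *\<^sub>R x \<in> convex hull T"
    and T: "finite T" "convex hull T \<subseteq> {x\<in>conic_hull S. u x = 1}"
    and e: "e extreme_point_of (convex hull T)"
  shows "cone_face (ray_of e) (conic_hull S)"
proof -
  have "{e} exposed_face_of convex hull T"
    using e face_of_singleton exposed_face_of_polyhedron polyhedron_convex_hull[OF T(1)] by blast
  then obtain a b where ab: "convex hull T \<subseteq> {x. a \<bullet> x \<le> b}" "{e} = convex hull T \<inter> {x. a \<bullet> x = b}"
    unfolding exposed_face_of_def by blast
  define f where "f x = b * u x - a \<bullet> x" for x
  have lf: "linear f"
    unfolding f_def
    using linear_compose_sub[OF linear_compose_scale_right[OF u(1), of b] bounded_linear_inner_right[THEN bounded_linear.linear, of a]]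
    by simp
  have e_props: "e \<in> conic_hull S" "u e = 1" "a \<bullet> e = b"
    using ab(2) T(2) by auto
  have f_eq: "f x = u x * (b - a \<bullet> ((1 / u x) *\<^sub>R x))" if "x \<in> conic_hull S" "x \<noteq> 0" for x
    using u(2)[OF that] by (simp add: f_def algebra_simps)
  have f_nonneg: "\<forall>x\<in>conic_hull S. f x \<ge> 0"
  proof
    fix x assume x: "x \<in> conic_hull S"
    show "f x \<ge> 0"
    proof (cases "x = 0")
      case True then show ?thesis using linear_0[OF lf] by simp
    next
      case False
      then show ?thesis
        using f_eq[OF x False] u(2)[OF x False] slice[OF x False] ab(1) by force
    qed
  qed
  have "ray_of e = {x\<in>conic_hull S. f x = 0}"
  proof (intro equalityI subsetI)
    fix y assume "y \<in> ray_of e"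
    then obtain c where c: "c \<ge> 0" "y = c *\<^sub>R e" by (rule ray_ofE)
    then show "y \<in> {x\<in>conic_hull S. f x = 0}"
      using e_props conic_hull_scaleR linear_scale[OF u(1)] by (simp add: f_def)
  next
    fix x assume x: "x \<in> {x\<in>conic_hull S. f x = 0}"
    show "x \<in> ray_of e"
    proof (cases "x = 0")
      case True then show ?thesis using ray_ofI[of 0 e] by simp
    next
      case False
      with x have "u x > 0"
        using u(2) by blast
      moreover have "u x * (b - a \<bullet> ((1 / u x) *\<^sub>R x)) = 0"
        using f_eq[of x] x False by simp
      ultimately have "a \<bullet> ((1 / u x) *\<^sub>R x) = b"
        by simp
      then have "(1 / u x) *\<^sub>R x = e"
        using ab(2) slice[OF _ False] x by blast
      then have "x = u x *\<^sub>R e"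
        using \<open>u x > 0\<close> by auto
      then show ?thesis using ray_ofI[of "u x" e] \<open>u x > 0\<close> by simp
    qed
  qed
  then show ?thesis
    unfolding cone_face_def using lf f_nonneg by blast
qed

text \<open>Normalising the nonzero generators into the hyperplane u = 1 gives a polytope slice of the
  cone; the rays through its vertices are faces and generate the cone.\<close>
lemma conic_hull_ray_generators:
  fixes S :: "'a::euclidean_space set"
  assumes "finite S" "sharp (conic_hull S)"
  obtains E where "finite E" "0 \<notin> E" "conic_hull E = conic_hull S"
    "\<And>e. e \<in> E \<Longrightarrow> cone_face (ray_of e) (conic_hull S)"
proof -
  obtain u :: "'a \<Rightarrow> real" where u: "linear u" "\<And>x. x \<in> conic_hull S \<Longrightarrow> x \<noteq> 0 \<Longrightarrow> u x > 0"
    using sharp_conic_hull_positive_form[OF assms] by blast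
  define T where "T = (\<lambda>s. (1 / u s) *\<^sub>R s) ` (S - {0})"
  define E where "E = {x. x extreme_point_of (convex hull T)}"
  have u_gen: "u s > 0" if "s \<in> S - {0}" for s
    using u(2) conic_hull_inc that by blast
  have slice: "(1 / u x) *\<^sub>R x \<in> convex hull T" if "x \<in> conic_hull S" "x \<noteq> 0" for x
  proof -
    have "x \<in> conic_hull (S - {0})"
      using that(1) by (simp add: conic_hull_Diff_0)
    note normalized_mem_convex_hull[OF u(1) u_gen this u(2)[OF that]]
    then show ?thesis
      unfolding T_def .
  qed
  have "T \<subseteq> conic_hull S"
  proof
    fix t assume "t \<in> T"
    then obtain s where s: "s \<in> S - {0}" "t = (1 / u s) *\<^sub>R s"
      unfolding T_def by blast
    then show "t \<in> conic_hull S"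
      using u_gen[OF s(1)] conic_hull_inc[of s S] by (simp add: conic_hull_scaleR)
  qed
  then have hull_T_cone: "convex hull T \<subseteq> conic_hull S"
    by (rule hull_minimal) (rule convex_conic_hull)
  have "T \<subseteq> {x. u x = 1}"
    unfolding T_def using u_gen by (force simp: linear_scale[OF u(1)])
  moreover have "convex {x. u x = 1}"
    unfolding convex_def using linear_add[OF u(1)] linear_scale[OF u(1)] by (simp add: algebra_simps)
  ultimately have "convex hull T \<subseteq> {x. u x = 1}"
    by (rule hull_minimal)
  with hull_T_cone have T_slice: "convex hull T \<subseteq> {x\<in>conic_hull S. u x = 1}"
    by blast
  have fin_T: "finite T" using assms(1) by (simp add: T_def)
  have E_T: "E \<subseteq> T"
    using extreme_points_of_convex_hull[of T] by (simp add: E_def)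
  have hull_E: "convex hull E = convex hull T"
    unfolding E_def using Krein_Milman_polytope[OF fin_T] by simp
  have E_slice: "E \<subseteq> {x\<in>conic_hull S. u x = 1}"
    using E_T hull_subset[of T convex] T_slice by (meson order_trans)
  show thesis
  proof (rule that)
    show "finite E" using finite_subset[OF E_T fin_T] .
    show "0 \<notin> E" using E_slice linear_0[OF u(1)] by auto
    show "conic_hull E = conic_hull S"
    proof
      show "conic_hull E \<subseteq> conic_hull S"
        using E_slice by (intro conic_hull_subset_conic_hull) blast
      show "conic_hull S \<subseteq> conic_hull E"
      proof
        fix x assume x: "x \<in> conic_hull S"
        show "x \<in> conic_hull E"
        proof (cases "x = 0")
          case True then show ?thesis using conic_hull_0 by simp
        next
          case False
          have "convex hull E \<subseteq> conic_hull E"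
            by (rule hull_minimal) (auto intro: conic_hull_inc convex_conic_hull)
          then have "(1 / u x) *\<^sub>R x \<in> conic_hull E"
            using slice[OF x False] hull_E by blast
          then show ?thesis
            using conic_hull_scaleR[of "(1 / u x) *\<^sub>R x" E "u x"] u(2)[OF x False] by simp
        qed
      qed
    qed
    show "cone_face (ray_of e) (conic_hull S)" if "e \<in> E" for e
      using extreme_point_ray_face[OF u slice fin_T T_slice] that by (simp add: E_def)
  qed
qed

section \<open>Lattices and primitive generators\<close>

lemma Gcd_fin_int_lincomb:
  fixes k :: "'a \<Rightarrow> int"
  assumes "finite A"
  shows "\<exists>a. (\<Sum>x\<in>A. a x * k x) = Gcd_fin (k ` A)"
  using assms
proof (induction A rule: finite_induct)
  case empty then show ?case by simp
next
  case (insert x A)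
  then obtain a where a: "(\<Sum>y\<in>A. a y * k y) = Gcd_fin (k ` A)" by blast
  obtain s t where st: "s * k x + t * Gcd_fin (k ` A) = gcd (k x) (Gcd_fin (k ` A))"
    using bezout_int by blast
  define a' where "a' y = (if y = x then s else t * a y)" for y
  have "(\<Sum>y\<in>A. a' y * k y) = t * (\<Sum>y\<in>A. a y * k y)"
    using insert.hyps(2) by (auto simp: a'_def sum_distrib_left mult.assoc intro!: sum.cong)
  then have "(\<Sum>y\<in>insert x A. a' y * k y) = gcd (k x) (Gcd_fin (k ` A))"
    using insert.hyps st a by (simp add: a'_def)
  then show ?case using insert.hyps by auto
qed

definition is_primitive :: "'a::real_vector set \<Rightarrow> 'a set \<Rightarrow> 'a \<Rightarrow> bool" where
  "is_primitive N \<rho> v \<longleftrightarrow> v \<in> N \<inter> \<rho> \<and> v \<noteq> 0 \<and> (\<forall>w\<in>N \<inter> \<rho>. \<exists>k::nat. w = of_nat k *\<^sub>R v)"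

lemma is_primitive_unique:
  assumes "is_primitive N \<rho> p" "is_primitive N \<rho> q"
  shows "q = p"
proof -
  obtain k l :: nat where k: "q = of_nat k *\<^sub>R p" and l: "p = of_nat l *\<^sub>R q"
    using assms unfolding is_primitive_def by blast
  have "of_nat (l * k) *\<^sub>R p = 1 *\<^sub>R p"
    using l[unfolded k] by (metis of_nat_mult scaleR_one scaleR_scaleR)
  then have "of_nat (l * k) = (1::real)"
    using assms(1) unfolding is_primitive_def scaleR_cancel_right by blast
  then have "l * k = 1"
    by (simp only: of_nat_eq_1_iff)
  then show ?thesis using k by simp
qed

lemma prim_gen_eq: "is_primitive N \<rho> p \<Longrightarrow> prim_gen N \<rho> = p"
  unfolding prim_gen_def using is_primitive_unique
  by (intro the_equality) (auto simp: is_primitive_def)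

locale lattice_basis =
  fixes B :: "'a::euclidean_space set" and N :: "'a set"
  assumes finite_B: "finite B" and independent_B: "independent B" and span_B: "span B = UNIV"
    and lattice_eq: "N = {x. \<exists>k::'a \<Rightarrow> int. x = (\<Sum>b\<in>B. of_int (k b) *\<^sub>R b)}"
begin

definition coord :: "'a \<Rightarrow> 'a \<Rightarrow> real" where
  "coord x = representation B x"

lemma coord_sum_eq: "(\<Sum>b\<in>B. coord x b *\<^sub>R b) = x"
  unfolding coord_def using sum_representation_eq[OF independent_B _ finite_B] span_B by simp

lemma coord_unique:
  assumes "x = (\<Sum>b\<in>B. c b *\<^sub>R b)" "b \<in> B"
  shows "coord x b = c b"
proof -
  have "(\<Sum>b\<in>B. (coord x b - c b) *\<^sub>R b) = 0"
    using coord_sum_eq[of x] assms(1) by (simp add: scaleR_diff_left sum_subtractf)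
  then show ?thesis
    using independent_B finite_B assms(2) by (auto simp: independent_explicit)
qed

lemma coord_add: "coord (x + y) b = coord x b + coord y b"
  unfolding coord_def using representation_add[OF independent_B] span_B by simp

lemma coord_scaleR: "coord (a *\<^sub>R x) b = a * coord x b"
  unfolding coord_def using representation_scale[OF independent_B] span_B by simp

lemma coord_0: "coord 0 b = 0"
  unfolding coord_def by (simp add: representation_zero)

lemma coord_basis: "b' \<in> B \<Longrightarrow> coord b' b = (if b = b' then 1 else 0)"
  unfolding coord_def by (simp add: representation_basis[OF independent_B])

lemma linear_coord_form: "linear (\<lambda>x. \<Sum>b\<in>B. c b * coord x b)"
  by (rule linearI) (simp_all add: coord_add coord_scaleR sum.distrib sum_distrib_left
      distrib_left mult.left_commute)

lemma mem_lattice_iff: "x \<in> N \<longleftrightarrow> (\<forall>b\<in>B. coord x b \<in> \<int>)"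
proof
  assume "x \<in> N"
  then obtain k :: "'a \<Rightarrow> int" where "x = (\<Sum>b\<in>B. of_int (k b) *\<^sub>R b)"
    using lattice_eq by blast
  then show "\<forall>b\<in>B. coord x b \<in> \<int>"
    using coord_unique by simp
next
  assume "\<forall>b\<in>B. coord x b \<in> \<int>"
  then have "x = (\<Sum>b\<in>B. of_int \<lfloor>coord x b\<rfloor> *\<^sub>R b)"
    using coord_sum_eq[of x] by (auto elim!: Ints_cases intro!: sum.cong)
  then show "x \<in> N"
    unfolding lattice_eq by (intro CollectI exI[of _ "\<lambda>b. \<lfloor>coord x b\<rfloor>"])
qed

lemma basis_subset_lattice: "B \<subseteq> N"
  by (auto simp: mem_lattice_iff coord_basis)

text \<open>The content of a lattice point, i.e.\ the gcd of its coordinates, is an integer combination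
  of them (B\'ezout).\<close>
lemma lattice_point_content:
  assumes "x \<in> N" "x \<noteq> 0"
  obtains d :: int and a :: "'a \<Rightarrow> int"
  where "d > 0" "(1 / of_int d) *\<^sub>R x \<in> N" "(\<Sum>b\<in>B. of_int (a b) * coord x b) = of_int d"
proof -
  define k where "k b = \<lfloor>coord x b\<rfloor>" for b
  have k: "coord x b = of_int (k b)" if "b \<in> B" for b
    using assms(1) that unfolding mem_lattice_iff k_def by (auto elim!: Ints_cases)
  define d where "d = Gcd_fin (k ` B)"
  obtain a where a: "(\<Sum>b\<in>B. a b * k b) = d"
    using Gcd_fin_int_lincomb[OF finite_B] unfolding d_def by blast
  have "d \<noteq> 0"
  proof
    assume "d = 0"
    then have "\<forall>b\<in>B. coord x b = 0"
      using k finite_B by (force simp: d_def Gcd_fin_0_iff)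
    then show False
      using coord_sum_eq[of x] assms(2) by simp
  qed
  moreover have "d \<ge> 0"
    unfolding d_def by (metis Gcd_fin.normalize abs_ge_zero normalize_int_def)
  ultimately have "d > 0" by simp
  moreover have "(1 / of_int d) *\<^sub>R x \<in> N"
  proof -
    have "of_int (k b) / (of_int d :: real) \<in> \<int>" if "b \<in> B" for b
      using of_int_divide_in_Ints[where 'a = real, of d "k b"] Gcd_fin_dvd[of "k b" "k ` B"] that
      by (simp add: d_def)
    then show ?thesis
      unfolding mem_lattice_iff coord_scaleR using k by simp
  qed
  moreover have "(\<Sum>b\<in>B. of_int (a b) * coord x b) = of_int d"
    using a k by (simp flip: a)
  ultimately show thesis by (rule that)
qed

lemma ex_primitive:
  assumes "x \<in> N" "x \<noteq> 0"
  shows "\<exists>p. is_primitive N (ray_of x) p"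
proof -
  obtain d :: int and a :: "'a \<Rightarrow> int" where
    d: "d > 0" "(1 / of_int d) *\<^sub>R x \<in> N" "(\<Sum>b\<in>B. of_int (a b) * coord x b) = of_int d"
    using lattice_point_content[OF assms] by blast
  define p where "p = (1 / of_int d) *\<^sub>R x"
  have "\<exists>k::nat. w = of_nat k *\<^sub>R p" if w: "w \<in> N" "w \<in> ray_of x" for w
  proof -
    obtain t where t: "t \<ge> 0" "w = t *\<^sub>R x"
      using w(2) by (rule ray_ofE)
    have "t * of_int d = (\<Sum>b\<in>B. of_int (a b) * coord w b)"
      unfolding d(3)[symmetric] t(2) coord_scaleR by (simp add: sum_distrib_left mult.left_commute)
    also have "\<dots> \<in> \<int>"
      using w(1) unfolding mem_lattice_iff by (intro Ints_sum Ints_mult) auto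
    finally have "t * of_int d \<in> \<nat>"
      using t(1) d(1) by (simp add: Nats_altdef2)
    then obtain n :: nat where "t * of_int d = of_nat n"
      by (rule Nats_cases)
    then have "t = of_nat n / of_int d"
      using d(1) by (simp add: eq_divide_eq)
    then have "w = of_nat n *\<^sub>R p"
      by (simp add: p_def t(2))
    then show ?thesis by blast
  qed
  moreover have "p \<in> N" "p \<in> ray_of x" "p \<noteq> 0"
    using d assms(2) by (auto simp: p_def ray_ofI)
  ultimately show ?thesis
    unfolding is_primitive_def by blast
qed

lemma prim_gen_ray_of:
  assumes "v \<in> N" "v \<noteq> 0" "\<rho> = ray_of v"
  shows "is_primitive N \<rho> (prim_gen N \<rho>)" "ray_of (prim_gen N \<rho>) = \<rho>"
proof -
  obtain p where p: "is_primitive N \<rho> p"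
    using ex_primitive[OF assms(1,2)] assms(3) by blast
  then show prim: "is_primitive N \<rho> (prim_gen N \<rho>)"
    using prim_gen_eq[OF p] by simp
  then show "ray_of (prim_gen N \<rho>) = \<rho>"
    using ray_of_nonzero_mem assms(3) unfolding is_primitive_def by blast
qed

lemma primitive_unimodular_form:
  assumes "is_primitive N (ray_of p) p"
  obtains a :: "'a \<Rightarrow> int" where "(\<Sum>b\<in>B. of_int (a b) * coord p b) = 1"
proof -
  have p: "p \<in> N" "p \<noteq> 0"
    using assms unfolding is_primitive_def by auto
  obtain d :: int and a :: "'a \<Rightarrow> int" where
    d: "d > 0" "(1 / of_int d) *\<^sub>R p \<in> N" "(\<Sum>b\<in>B. of_int (a b) * coord p b) = of_int d"
    using lattice_point_content[OF p] by blast
  have "(1 / of_int d) *\<^sub>R p \<in> ray_of p"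
    using d(1) by (simp add: ray_ofI)
  then obtain n :: nat where "(1 / of_int d) *\<^sub>R p = of_nat n *\<^sub>R p"
    using assms d(2) unfolding is_primitive_def by blast
  then have "(1 / of_int d - of_nat n) *\<^sub>R p = 0"
    by (simp add: scaleR_diff_left)
  then have "of_nat n * of_int d = (1::real)"
    using p(2) d(1) by (simp add: field_simps)
  then have "int n * d = 1"
    by (metis of_int_eq_1_iff of_int_mult of_int_of_nat_eq)
  then have "d = 1"
    using d(1) by (simp add: zmult_eq_1_iff)
  then show thesis using that d(3) by simp
qed

end

section \<open>Modules over a subring of the reals\<close>

lemma
  assumes "real_subring R"
  shows real_subring_0: "0 \<in> R" and real_subring_1: "1 \<in> R"
    and real_subring_add: "x \<in> R \<Longrightarrow> y \<in> R \<Longrightarrow> x + y \<in> R"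
    and real_subring_diff: "x \<in> R \<Longrightarrow> y \<in> R \<Longrightarrow> x - y \<in> R"
    and real_subring_mult: "x \<in> R \<Longrightarrow> y \<in> R \<Longrightarrow> x * y \<in> R"
  using assms unfolding real_subring_def by blast+

lemma real_subring_uminus: "real_subring R \<Longrightarrow> x \<in> R \<Longrightarrow> - x \<in> R"
  using real_subring_diff[of R 0 x] real_subring_0 by simp

lemma real_subring_sum: "real_subring R \<Longrightarrow> (\<And>i. i \<in> A \<Longrightarrow> f i \<in> R) \<Longrightarrow> sum f A \<in> R"
  by (induction A rule: infinite_finite_induct) (auto simp: real_subring_0 real_subring_add)

lemma Ints_subset_real_subring:
  assumes "real_subring R"
  shows "\<int> \<subseteq> R"
proof
  have nat: "of_nat n \<in> R" for n
    by (induction n) (auto simp: real_subring_0 real_subring_1 real_subring_add assms)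
  fix x :: real assume "x \<in> \<int>"
  then obtain k where k: "x = of_int k" by (rule Ints_cases)
  show "x \<in> R"
  proof (cases "k \<ge> 0")
    case True
    then show ?thesis using nat[of "nat k"] k by simp
  next
    case False
    then show ?thesis using real_subring_uminus[OF assms nat[of "nat (- k)"]] k by simp
  qed
qed

lemma RspanI: "finite F \<Longrightarrow> F \<subseteq> S \<Longrightarrow> \<forall>v\<in>F. c v \<in> R \<Longrightarrow> (\<Sum>v\<in>F. c v *\<^sub>R v) \<in> Rspan R S"
  unfolding Rspan_eq_restricted_span by (rule restricted_spanI)

lemma RspanE:
  assumes "x \<in> Rspan R S"
  obtains F c where "finite F" "F \<subseteq> S" "\<forall>v\<in>F. c v \<in> R" "x = (\<Sum>v\<in>F. c v *\<^sub>R v)"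
  using assms unfolding Rspan_eq_restricted_span by (rule restricted_spanE)

lemma Rspan_0: "0 \<in> Rspan R S"
  by (simp add: Rspan_eq_restricted_span restricted_span_0)

lemma Rspan_inc: "real_subring R \<Longrightarrow> v \<in> S \<Longrightarrow> v \<in> Rspan R S"
  by (simp add: Rspan_eq_restricted_span restricted_span_inc real_subring_1)

lemma Rspan_add: "real_subring R \<Longrightarrow> x \<in> Rspan R S \<Longrightarrow> y \<in> Rspan R S \<Longrightarrow> x + y \<in> Rspan R S"
  unfolding Rspan_eq_restricted_span
  by (rule restricted_span_add) (auto simp: real_subring_0 real_subring_add)

lemma Rspan_scaleR: "real_subring R \<Longrightarrow> a \<in> R \<Longrightarrow> x \<in> Rspan R S \<Longrightarrow> a *\<^sub>R x \<in> Rspan R S"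
  unfolding Rspan_eq_restricted_span by (rule restricted_span_scaleR) (auto simp: real_subring_mult)

lemma Rspan_diff: "real_subring R \<Longrightarrow> x \<in> Rspan R S \<Longrightarrow> y \<in> Rspan R S \<Longrightarrow> x - y \<in> Rspan R S"
  using Rspan_add[of R x S "(- 1) *\<^sub>R y"] Rspan_scaleR[of R "- 1" y S]
  by (simp add: real_subring_uminus real_subring_1)

lemma Rspan_minimal:
  assumes "0 \<in> C" "\<And>x y. x \<in> C \<Longrightarrow> y \<in> C \<Longrightarrow> x + y \<in> C"
    and "\<And>x a. x \<in> C \<Longrightarrow> a \<in> R \<Longrightarrow> a *\<^sub>R x \<in> C" "S \<subseteq> C"
  shows "Rspan R S \<subseteq> C"
  unfolding Rspan_eq_restricted_span using assms by (rule restricted_span_minimal)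

lemma Rspan_mono: "S \<subseteq> T \<Longrightarrow> Rspan R S \<subseteq> Rspan R T"
  unfolding Rspan_eq_restricted_span by (rule restricted_span_mono)

lemma Rspan_sum:
  "real_subring R \<Longrightarrow> (\<And>i. i \<in> A \<Longrightarrow> f i \<in> Rspan R S) \<Longrightarrow> sum f A \<in> Rspan R S"
  by (induction A rule: infinite_finite_induct) (auto simp: Rspan_0 Rspan_add)

definition R_submodule :: "real set \<Rightarrow> 'a::real_vector set \<Rightarrow> bool" where
  "R_submodule R M \<longleftrightarrow> 0 \<in> M \<and> (\<forall>x\<in>M. \<forall>y\<in>M. x + y \<in> M) \<and> (\<forall>x\<in>M. \<forall>r\<in>R. r *\<^sub>R x \<in> M)"

lemma R_submodule_Rspan: "real_subring R \<Longrightarrow> R_submodule R (Rspan R S)"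
  unfolding R_submodule_def by (simp add: Rspan_0 Rspan_add Rspan_scaleR)

lemma Rspan_subset_R_submodule: "R_submodule R M \<Longrightarrow> S \<subseteq> M \<Longrightarrow> Rspan R S \<subseteq> M"
  unfolding R_submodule_def by (intro Rspan_minimal) auto

lemma R_submodule_uminus:
  assumes "real_subring R" "R_submodule R M" "x \<in> M"
  shows "- x \<in> M"
  using assms real_subring_uminus[OF assms(1) real_subring_1[OF assms(1)]]
  unfolding R_submodule_def by (metis scaleR_minus1_left)

lemma R_submodule_diff:
  assumes "real_subring R" "R_submodule R M" "x \<in> M" "y \<in> M"
  shows "x - y \<in> M"
  using assms R_submodule_uminus[OF assms(1,2,4)] unfolding R_submodule_def
  by (metis diff_conv_add_uminus)

lemma R_submodule_kernel:
  assumes "R_submodule R M" "\<And>i. i \<in> I \<Longrightarrow> linear (\<pi> i)"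
  shows "R_submodule R {x\<in>M. \<forall>i\<in>I. \<pi> i x = (0::real)}"
  using assms unfolding R_submodule_def by (simp add: linear_0 linear_add linear_scale)

lemma R_submodule_image_ideal:
  fixes \<pi> :: "'a::real_vector \<Rightarrow> real"
  assumes R: "real_subring R" and M: "R_submodule R M" and \<pi>: "linear \<pi>" "\<pi> ` M \<subseteq> R"
  shows "ring_ideal R (\<pi> ` M)"
  unfolding ring_ideal_def
proof (intro conjI ballI)
  show "\<pi> ` M \<subseteq> R" by (fact \<pi>(2))
  show "0 \<in> \<pi> ` M"
    using M linear_0[OF \<pi>(1)] unfolding R_submodule_def by (metis image_eqI)
  fix x y assume "x \<in> \<pi> ` M" "y \<in> \<pi> ` M"
  then obtain a c where ac: "a \<in> M" "c \<in> M" "x = \<pi> a" "y = \<pi> c" by blast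
  have "a + c \<in> M"
    using M ac unfolding R_submodule_def by blast
  then show "x + y \<in> \<pi> ` M"
    using ac linear_add[OF \<pi>(1)] by (metis image_eqI)
  show "- x \<in> \<pi> ` M"
    using R_submodule_uminus[OF R M ac(1)] ac linear_neg[OF \<pi>(1)] by (metis image_eqI)
next
  fix r x assume "r \<in> R" "x \<in> \<pi> ` M"
  then obtain a where a: "a \<in> M" "x = \<pi> a" by blast
  then have "r *\<^sub>R a \<in> M"
    using M \<open>r \<in> R\<close> unfolding R_submodule_def by blast
  then show "r * x \<in> \<pi> ` M"
    using a linear_scale[OF \<pi>(1)] by (metis image_eqI real_scaleR_def)
qed

lemma dual_WI: "linear u \<Longrightarrow> (\<And>w. w \<in> W \<Longrightarrow> u w \<in> R) \<Longrightarrow> u \<in> dual_W R W"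
  unfolding dual_W_def by blast

lemma dual_W_linear: "u \<in> dual_W R W \<Longrightarrow> linear u"
  unfolding dual_W_def by blast

lemma dual_W_mem: "u \<in> dual_W R W \<Longrightarrow> w \<in> W \<Longrightarrow> u w \<in> R"
  unfolding dual_W_def by blast

lemma dual_W_diff:
  "real_subring R \<Longrightarrow> u \<in> dual_W R W \<Longrightarrow> v \<in> dual_W R W \<Longrightarrow> (\<lambda>x. u x - v x) \<in> dual_W R W"
  by (auto simp: dual_W_def real_subring_diff linear_compose_sub)

lemma dual_W_cmult:
  "real_subring R \<Longrightarrow> a \<in> R \<Longrightarrow> u \<in> dual_W R W \<Longrightarrow> (\<lambda>x. a * u x) \<in> dual_W R W"
  using linear_compose_scale_right[of u a]
  by (auto simp: dual_W_def real_subring_mult)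

lemma dual_W_sum:
  assumes "real_subring R" "\<And>i. i \<in> A \<Longrightarrow> f i \<in> dual_W R W"
  shows "(\<lambda>x. \<Sum>i\<in>A. f i x) \<in> dual_W R W"
  using assms
  by (induction A rule: infinite_finite_induct)
    (auto simp: dual_W_def real_subring_0 real_subring_add linear_zero linear_compose_add)

lemma R_independentD:
  assumes "R_independent R B" "finite F" "F \<subseteq> B" "\<forall>v\<in>F. c v \<in> R" "(\<Sum>v\<in>F. c v *\<^sub>R v) = 0"
    and "v \<in> F"
  shows "c v = 0"
  using assms unfolding R_independent_def by blast

lemma R_independent_insert_coeff_unique:
  assumes R: "real_subring R" and indep: "R_independent R (insert s S)" and "s \<notin> S"
    and "c \<in> R" "c' \<in> R" "x \<in> Rspan R S" "x' \<in> Rspan R S"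
    and eq: "c *\<^sub>R s + x = c' *\<^sub>R s + x'"
  shows "c = c'"
proof -
  obtain F e where F: "finite F" "F \<subseteq> S" "\<forall>v\<in>F. e v \<in> R" "x - x' = (\<Sum>v\<in>F. e v *\<^sub>R v)"
    using Rspan_diff[OF R assms(6,7)] by (rule RspanE)
  define e' where "e' = e(s := c - c')"
  have "s \<notin> F" using F(2) \<open>s \<notin> S\<close> by blast
  then have sum_F: "(\<Sum>v\<in>F. e' v *\<^sub>R v) = x - x'"
    unfolding F(4) by (intro sum.cong) (auto simp: e'_def)
  have "(\<Sum>v\<in>insert s F. e' v *\<^sub>R v) = e' s *\<^sub>R s + (\<Sum>v\<in>F. e' v *\<^sub>R v)"
    using F(1) \<open>s \<notin> F\<close> by (rule sum.insert)
  also have "\<dots> = (c - c') *\<^sub>R s + (x - x')"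
    unfolding sum_F by (simp add: e'_def)
  also have "\<dots> = 0"
    using eq by (simp add: algebra_simps)
  finally have "(\<Sum>v\<in>insert s F. e' v *\<^sub>R v) = 0" .
  moreover have "\<forall>v\<in>insert s F. e' v \<in> R"
    using F(3) real_subring_diff[OF R assms(4,5)] by (simp add: e'_def)
  ultimately have "e' s = 0"
    using R_independentD[OF indep, of "insert s F" e' s] F(1,2) by blast
  then show ?thesis by (simp add: e'_def)
qed

lemma R_basis_coeff_form:
  assumes R: "real_subring R" and basis: "R_basis R W Bw" and s: "s \<in> Bw"
  obtains f where "\<And>x y. x \<in> W \<Longrightarrow> y \<in> W \<Longrightarrow> f (x + y) = f x + f y"
    "\<And>r x. r \<in> R \<Longrightarrow> x \<in> W \<Longrightarrow> f (r *\<^sub>R x) = r * f x" "\<And>x. x \<in> W \<Longrightarrow> f x \<in> R"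
    "\<And>t. t \<in> Bw \<Longrightarrow> f t = (if t = s then 1 else 0)"
proof -
  define D where "D w c \<longleftrightarrow> c \<in> R \<and> (\<exists>x\<in>Rspan R (Bw - {s}). w = c *\<^sub>R s + x)" for w c
  have indep: "R_independent R (insert s (Bw - {s}))"
    using basis s unfolding R_basis_def by (simp add: insert_absorb)
  have uniq: "c = c'" if D: "D w c" "D w c'" for w c c'
  proof -
    obtain x x' where "c \<in> R" "c' \<in> R" "x \<in> Rspan R (Bw - {s})" "x' \<in> Rspan R (Bw - {s})"
      "w = c *\<^sub>R s + x" "w = c' *\<^sub>R s + x'"
      using D unfolding D_def by blast
    then show ?thesis
      using R_independent_insert_coeff_unique[OF R indep] by simp
  qed
  have ex: "\<exists>c. D w c" if "w \<in> W" for w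
  proof -
    have "w \<in> Rspan R Bw"
      using that basis unfolding R_basis_def by blast
    then obtain F e where F: "finite F" "F \<subseteq> Bw" "\<forall>v\<in>F. e v \<in> R" "w = (\<Sum>v\<in>F. e v *\<^sub>R v)"
      by (rule RspanE)
    define c where "c = (if s \<in> F then e s else 0)"
    have "w = c *\<^sub>R s + (\<Sum>v\<in>F - {s}. e v *\<^sub>R v)"
      using F(1,4) by (cases "s \<in> F") (simp_all add: c_def sum.remove)
    moreover have "(\<Sum>v\<in>F - {s}. e v *\<^sub>R v) \<in> Rspan R (Bw - {s})"
      using F by (intro RspanI) auto
    moreover have "c \<in> R"
      using F(3) real_subring_0[OF R] by (simp add: c_def)
    ultimately show ?thesis unfolding D_def by blast
  qed
  define f where "f w = (THE c. D w c)" for w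
  have f_eq: "f w = c" if "D w c" for w c
    unfolding f_def using that uniq by blast
  have D_f: "D w (f w)" if "w \<in> W" for w
    using ex[OF that] f_eq by blast
  have D_add: "D (x + y) (c + d)" if D: "D x c" "D y d" for x y c d
  proof -
    obtain x' y' where "x' \<in> Rspan R (Bw - {s})" "y' \<in> Rspan R (Bw - {s})"
      "x = c *\<^sub>R s + x'" "y = d *\<^sub>R s + y'" "c \<in> R" "d \<in> R"
      using D unfolding D_def by blast
    then show ?thesis
      unfolding D_def using Rspan_add[OF R] real_subring_add[OF R]
      by (intro conjI bexI[of _ "x' + y'"]) (simp_all add: algebra_simps)
  qed
  have D_scale: "D (r *\<^sub>R x) (r * c)" if r: "r \<in> R" and D: "D x c" for r x c
  proof -
    obtain x' where "x' \<in> Rspan R (Bw - {s})" "x = c *\<^sub>R s + x'" "c \<in> R"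
      using D unfolding D_def by blast
    then show ?thesis
      unfolding D_def using Rspan_scaleR[OF R r] real_subring_mult[OF R r]
      by (intro conjI bexI[of _ "r *\<^sub>R x'"]) (simp_all add: algebra_simps)
  qed
  have D_basis: "D t (if t = s then 1 else 0)" if "t \<in> Bw" for t
  proof (cases "t = s")
    case True
    then show ?thesis
      unfolding D_def using Rspan_0 real_subring_1[OF R] by (intro conjI bexI[of _ 0]) simp_all
  next
    case False
    then show ?thesis
      unfolding D_def using that Rspan_inc[OF R, of t "Bw - {s}"] real_subring_0[OF R]
      by (intro conjI bexI[of _ t]) simp_all
  qed
  show thesis
  proof (rule that)
    show "f (x + y) = f x + f y" if "x \<in> W" "y \<in> W" for x y
      using f_eq D_add D_f that by blast
    show "f (r *\<^sub>R x) = r * f x" if "r \<in> R" "x \<in> W" for r x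
      using f_eq D_scale D_f that by blast
    show "f x \<in> R" if "x \<in> W" for x
      using D_f[OF that] unfolding D_def by blast
    show "f t = (if t = s then 1 else 0)" if "t \<in> Bw" for t
      using f_eq D_basis that by blast
  qed
qed

text \<open>The inductive step in the proof that submodules of free modules over a principal ideal ring
  are free.\<close>
lemma R_basis_insert_kernel:
  fixes \<pi> :: "'a::real_vector \<Rightarrow> real"
  assumes R: "real_subring R" and M: "R_submodule R M" and \<pi>: "linear \<pi>"
    and image: "\<pi> ` M = {r * a | r. r \<in> R}" and "a \<noteq> 0" and m0: "m0 \<in> M" "\<pi> m0 = a"
    and C: "R_basis R {x\<in>M. \<pi> x = 0} C"
  shows "R_basis R M (insert m0 C)"
proof -
  have C_props: "C \<subseteq> M" "\<forall>v\<in>C. \<pi> v = 0" "R_independent R C" "Rspan R C = {x\<in>M. \<pi> x = 0}"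
    using C unfolding R_basis_def by auto
  have "R_independent R (insert m0 C)"
    unfolding R_independent_def
  proof (intro allI impI)
    fix F c assume h: "finite F \<and> F \<subseteq> insert m0 C \<and> (\<forall>v\<in>F. c v \<in> R) \<and> (\<Sum>v\<in>F. c v *\<^sub>R v) = 0"
    have c_m0: "c m0 = 0" if "m0 \<in> F"
    proof -
      have "\<pi> (\<Sum>v\<in>F. c v *\<^sub>R v) = (\<Sum>v\<in>F. c v * \<pi> v)"
        by (simp add: linear_sum[OF \<pi>] linear_scale[OF \<pi>])
      then have "0 = (\<Sum>v\<in>F. c v * \<pi> v)"
        using h linear_0[OF \<pi>] by simp
      also have "\<dots> = c m0 * \<pi> m0 + (\<Sum>v\<in>F - {m0}. c v * \<pi> v)"
        using h that by (simp add: sum.remove)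
      also have "(\<Sum>v\<in>F - {m0}. c v * \<pi> v) = 0"
        using h C_props(2) by (intro sum.neutral) auto
      finally show ?thesis using \<open>a \<noteq> 0\<close> m0(2) by simp
    qed
    have "(\<Sum>v\<in>F - {m0}. c v *\<^sub>R v) = 0"
      using h c_m0 sum.remove[of F m0 "\<lambda>v. c v *\<^sub>R v"] by (cases "m0 \<in> F") auto
    moreover have "F - {m0} \<subseteq> C" "finite (F - {m0})"
      using h by auto
    ultimately have "\<forall>v\<in>F - {m0}. c v = 0"
      using R_independentD[OF C_props(3)] h by blast
    then show "\<forall>v\<in>F. c v = 0"
      using c_m0 by blast
  qed
  moreover have "Rspan R (insert m0 C) = M"
  proof
    show "Rspan R (insert m0 C) \<subseteq> M"
      using Rspan_subset_R_submodule[OF M] C_props(1) m0(1) by blast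
    show "M \<subseteq> Rspan R (insert m0 C)"
    proof
      fix x assume x: "x \<in> M"
      then obtain r where r: "r \<in> R" "\<pi> x = r * a"
        using image by blast
      have "r *\<^sub>R m0 \<in> M"
        using M m0(1) r(1) unfolding R_submodule_def by blast
      then have "x - r *\<^sub>R m0 \<in> {x\<in>M. \<pi> x = 0}"
        using R_submodule_diff[OF R M x] r m0(2) linear_diff[OF \<pi>] linear_scale[OF \<pi>] by simp
      then have "x - r *\<^sub>R m0 \<in> Rspan R (insert m0 C)"
        using C_props(4) Rspan_mono[of C "insert m0 C" R] by blast
      moreover have "r *\<^sub>R m0 \<in> Rspan R (insert m0 C)"
        using Rspan_scaleR[OF R r(1) Rspan_inc[OF R]] by blast
      ultimately show "x \<in> Rspan R (insert m0 C)"
        using Rspan_add[OF R] by fastforce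
    qed
  qed
  moreover have "insert m0 C \<subseteq> M"
    using C_props(1) m0(1) by blast
  ultimately show ?thesis unfolding R_basis_def by blast
qed

lemma R_basis_extend_dual_family:
  fixes g :: "'i \<Rightarrow> 'a::real_vector" and m :: "'i \<Rightarrow> 'a \<Rightarrow> real"
  assumes R: "real_subring R" and "finite I" and W: "R_submodule R W"
    and g: "\<And>i. i \<in> I \<Longrightarrow> g i \<in> W"
    and m: "\<And>i. i \<in> I \<Longrightarrow> linear (m i)" "\<And>i w. i \<in> I \<Longrightarrow> w \<in> W \<Longrightarrow> m i w \<in> R"
    and dual: "\<And>i j. i \<in> I \<Longrightarrow> j \<in> I \<Longrightarrow> m i (g j) = (if i = j then 1 else 0)"
    and C: "R_basis R {w\<in>W. \<forall>i\<in>I. m i w = 0} C"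
  shows "R_basis R W (g ` I \<union> C)"
proof -
  have C_props: "C \<subseteq> W" "\<And>i v. i \<in> I \<Longrightarrow> v \<in> C \<Longrightarrow> m i v = 0" "R_independent R C"
    "Rspan R C = {w\<in>W. \<forall>i\<in>I. m i w = 0}"
    using C unfolding R_basis_def by auto
  have m_basis: "m i v = (if v = g i then 1 else 0)" if "i \<in> I" "v \<in> g ` I \<union> C" for i v
    using that dual C_props(2) by (auto dest: C_props(2)[of i "g i"])
  have "R_independent R (g ` I \<union> C)"
    unfolding R_independent_def
  proof (intro allI impI)
    fix F c assume "finite F \<and> F \<subseteq> g ` I \<union> C \<and> (\<forall>v\<in>F. c v \<in> R) \<and> (\<Sum>v\<in>F. c v *\<^sub>R v) = 0"
    then have h: "finite F" "F \<subseteq> g ` I \<union> C" "\<forall>v\<in>F. c v \<in> R" "(\<Sum>v\<in>F. c v *\<^sub>R v) = 0"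
      by auto
    have c_g: "c v = 0" if v: "v \<in> F" "v \<in> g ` I" for v
    proof -
      obtain i where i: "i \<in> I" "v = g i" using v(2) by blast
      have "0 = m i (\<Sum>v\<in>F. c v *\<^sub>R v)"
        using h(4) linear_0[OF m(1)[OF i(1)]] by simp
      also have "\<dots> = (\<Sum>u\<in>F. if u = v then c u else 0)"
        using h(2) m_basis[OF i(1)] i(2)
        by (auto simp: linear_sum[OF m(1)[OF i(1)]] linear_scale[OF m(1)[OF i(1)]] intro!: sum.cong)
      also have "\<dots> = c v"
        using h(1) v(1) by simp
      finally show ?thesis by simp
    qed
    have "(\<Sum>v\<in>F - g ` I. c v *\<^sub>R v) = 0"
      using h c_g by (subst sum.mono_neutral_left[of F]) auto
    moreover have "F - g ` I \<subseteq> C" "finite (F - g ` I)"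
      using h by auto
    ultimately have "\<forall>v\<in>F - g ` I. c v = 0"
      using R_independentD[OF C_props(3)] h by blast
    then show "\<forall>v\<in>F. c v = 0"
      using c_g by blast
  qed
  moreover have gen_W: "g ` I \<union> C \<subseteq> W"
    using g C_props(1) by blast
  moreover have "Rspan R (g ` I \<union> C) = W"
  proof
    show span_W: "Rspan R (g ` I \<union> C) \<subseteq> W"
      using Rspan_subset_R_submodule[OF W gen_W] .
    show "W \<subseteq> Rspan R (g ` I \<union> C)"
    proof
      fix w assume w: "w \<in> W"
      define s where "s = (\<Sum>i\<in>I. m i w *\<^sub>R g i)"
      have s: "s \<in> Rspan R (g ` I \<union> C)"
        unfolding s_def using m(2) w by (intro Rspan_sum[OF R] Rspan_scaleR[OF R] Rspan_inc[OF R]) auto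
      have "m j s = m j w" if "j \<in> I" for j
      proof -
        have "m j s = (\<Sum>i\<in>I. if i = j then m i w else 0)"
          unfolding s_def using dual that
          by (auto simp: linear_sum[OF m(1)[OF that]] linear_scale[OF m(1)[OF that]] intro!: sum.cong)
        then show ?thesis using \<open>finite I\<close> that by simp
      qed
      moreover have "s \<in> W"
        using s span_W by blast
      ultimately have "w - s \<in> Rspan R C"
        using C_props(4) R_submodule_diff[OF R W w] m(1) by (simp add: linear_diff)
      then have "w - s \<in> Rspan R (g ` I \<union> C)"
        using Rspan_mono[of C "g ` I \<union> C" R] by blast
      then show "w \<in> Rspan R (g ` I \<union> C)"
        using Rspan_add[OF R _ s] by fastforce
    qed
  qed
  ultimately show ?thesis unfolding R_basis_def by blast
qed

context lattice_basis
begin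

lemma coord_Rspan_lattice:
  assumes R: "real_subring R" and w: "w \<in> Rspan R N"
  shows "coord w b \<in> R"
proof -
  have "coord x b \<in> R" if "x \<in> N" for x
  proof (cases "b \<in> B")
    case True
    then show ?thesis
      using that Ints_subset_real_subring[OF R] by (auto simp: mem_lattice_iff)
  next
    case False
    then show ?thesis
      using representation_ne_zero real_subring_0[OF R] unfolding coord_def by metis
  qed
  then have "Rspan R N \<subseteq> {x. coord x b \<in> R}"
    by (intro Rspan_minimal)
      (auto simp: coord_0 coord_add coord_scaleR real_subring_0 real_subring_add real_subring_mult R)
  then show ?thesis using w by blast
qed

lemma Rspan_lattice_subset:
  assumes "real_subring R"
  shows "Rspan R N \<subseteq> Rspan R B"
proof
  fix w assume "w \<in> Rspan R N"
  then have "(\<Sum>b\<in>B. coord w b *\<^sub>R b) \<in> Rspan R B"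
    using coord_Rspan_lattice[OF assms] by (intro RspanI[OF finite_B]) auto
  then show "w \<in> Rspan R B" by (simp add: coord_sum_eq)
qed

lemma coord_Rspan_outside:
  assumes "X \<subseteq> B" "x \<in> Rspan R X" "b \<notin> X"
  shows "coord x b = 0"
proof -
  have "Rspan R X \<subseteq> {x. coord x b = 0}"
    by (rule Rspan_minimal) (use assms(1,3) in \<open>auto simp: coord_0 coord_add coord_scaleR coord_basis\<close>)
  then show ?thesis using assms(2) by blast
qed

lemma Rspan_insert_coord_zero:
  assumes R: "real_subring R" and "insert b X \<subseteq> B" "x \<in> Rspan R (insert b X)" "coord x b = 0"
  shows "x \<in> Rspan R X"
proof -
  have "x = (\<Sum>b'\<in>B. coord x b' *\<^sub>R b')"
    by (simp add: coord_sum_eq)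
  also have "\<dots> = (\<Sum>b'\<in>X. coord x b' *\<^sub>R b')"
  proof (intro sum.mono_neutral_right[OF finite_B] ballI)
    show "X \<subseteq> B" using assms(2) by blast
    fix i assume "i \<in> B - X"
    then have "coord x i = 0"
      using assms(2-4) coord_Rspan_outside[of "insert b X" x R i] by (cases "i = b") auto
    then show "coord x i *\<^sub>R i = 0" by simp
  qed
  finally have "x = (\<Sum>b'\<in>X. coord x b' *\<^sub>R b')" .
  moreover have "x \<in> Rspan R N"
    using assms(2,3) basis_subset_lattice Rspan_mono[of "insert b X" N R] by blast
  ultimately show ?thesis
    using RspanI[of X X "coord x"] finite_subset[OF _ finite_B] assms(2)
      coord_Rspan_lattice[OF R] by simp
qed

end

context lattice_basis
begin

lemma primitive_dual_form:
  assumes R: "real_subring R" and "is_primitive N (ray_of p) p"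
  obtains l where "l \<in> dual_W R (Rspan R N)" "l p = 1"
proof -
  obtain a :: "'a \<Rightarrow> int" where a: "(\<Sum>b\<in>B. of_int (a b) * coord p b) = 1"
    using primitive_unimodular_form[OF assms(2)] by blast
  have "(\<lambda>x. \<Sum>b\<in>B. of_int (a b) * coord x b) \<in> dual_W R (Rspan R N)"
    using linear_coord_form coord_Rspan_lattice[OF R] Ints_subset_real_subring[OF R]
    by (intro dual_WI real_subring_sum[OF R] real_subring_mult[OF R]) auto
  then show thesis using that a by blast
qed

lemma R_linear_form_extends:
  assumes R: "real_subring R"
    and add: "\<And>x y. x \<in> Rspan R N \<Longrightarrow> y \<in> Rspan R N \<Longrightarrow> f (x + y) = f x + f y"
    and scale: "\<And>r x. r \<in> R \<Longrightarrow> x \<in> Rspan R N \<Longrightarrow> f (r *\<^sub>R x) = r * f x"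
  obtains m where "linear m" "\<And>w. w \<in> Rspan R N \<Longrightarrow> m w = f w"
proof
  show "linear (\<lambda>x. \<Sum>b\<in>B. f b * coord x b)"
    by (rule linear_coord_form)
  have B_W: "B \<subseteq> Rspan R N"
    using basis_subset_lattice Rspan_inc[OF R] by blast
  have f_sum: "f (\<Sum>b\<in>A. g b) = (\<Sum>b\<in>A. f (g b))"
    if "finite A" "\<And>b. b \<in> A \<Longrightarrow> g b \<in> Rspan R N" for A g
    using that
  proof (induction A rule: finite_induct)
    case empty
    then show ?case using add[OF Rspan_0 Rspan_0] by simp
  next
    case (insert b A)
    have "sum g A \<in> Rspan R N"
      using insert.prems by (intro Rspan_sum[OF R]) auto
    then show ?case
      using insert add[of "g b" "sum g A"] by simp
  qed
  fix w assume w: "w \<in> Rspan R N"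
  have "f w = f (\<Sum>b\<in>B. coord w b *\<^sub>R b)"
    by (simp add: coord_sum_eq)
  also have "\<dots> = (\<Sum>b\<in>B. f (coord w b *\<^sub>R b))"
    using B_W Rspan_scaleR[OF R coord_Rspan_lattice[OF R w]] by (intro f_sum[OF finite_B]) blast
  also have "\<dots> = (\<Sum>b\<in>B. f b * coord w b)"
    using B_W scale[OF coord_Rspan_lattice[OF R w]] by (intro sum.cong) (auto simp: mult.commute)
  finally show "(\<Sum>b\<in>B. f b * coord w b) = f w" ..
qed

lemma free_R_submodule:
  assumes R: "principal_ideal_subring R" and "A \<subseteq> B" "R_submodule R M" "M \<subseteq> Rspan R A"
  shows "\<exists>C. R_basis R M C"
proof -
  have subring: "real_subring R"
    using R unfolding principal_ideal_subring_def by blast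
  show ?thesis
    using finite_subset[OF assms(2) finite_B] assms(2-4)
  proof (induction A arbitrary: M rule: finite_induct)
    case empty
    then have "M = {0}"
      using Rspan_0 unfolding R_submodule_def Rspan_def by auto
    then have "R_basis R M {}"
      unfolding R_basis_def R_independent_def using Rspan_0 by (auto elim: RspanE)
    then show ?case by blast
  next
    case (insert b A)
    define \<pi> where "\<pi> x = coord x b" for x
    have \<pi>: "linear \<pi>"
      unfolding \<pi>_def by (rule linearI) (simp_all add: coord_add coord_scaleR)
    have "M \<subseteq> Rspan R N"
      using insert.prems Rspan_mono[of "insert b A" N R] basis_subset_lattice by blast
    then have "\<pi> ` M \<subseteq> R"
      using coord_Rspan_lattice[OF subring] by (auto simp: \<pi>_def)
    then obtain a where a: "\<pi> ` M = {r * a | r. r \<in> R}"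
      using R_submodule_image_ideal[OF subring insert.prems(2) \<pi>] R
      unfolding principal_ideal_subring_def by blast
    define M' where "M' = {x\<in>M. \<pi> x = 0}"
    have "R_submodule R M'"
      using R_submodule_kernel[OF insert.prems(2), of "{b}" "\<lambda>_. \<pi>"] \<pi> by (simp add: M'_def)
    moreover have "M' \<subseteq> Rspan R A"
      using Rspan_insert_coord_zero[OF subring insert.prems(1)] insert.prems(3)
      by (auto simp: M'_def \<pi>_def)
    ultimately obtain C where C: "R_basis R M' C"
      using insert.IH insert.prems(1) by blast
    show ?case
    proof (cases "a = 0")
      case True
      then have "M' = M" using a by (auto simp: M'_def)
      then show ?thesis using C by blast
    next
      case False
      obtain m0 where "m0 \<in> M" "\<pi> m0 = a"
        using a real_subring_1[OF subring] by (metis (mono_tags, lifting) image_iff mem_Collect_eq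
            mult_1)
      then show ?thesis
        using R_basis_insert_kernel[OF subring insert.prems(2) \<pi> a False] C by (auto simp: M'_def)
    qed
  qed
qed

end

section \<open>Regularity of a cone in a fan\<close>

lemma lattice_basis_exists:
  fixes N :: "'a::euclidean_space set"
  assumes "is_lattice N"
  shows "\<exists>B. lattice_basis B N"
proof -
  obtain B where "finite B" "card B = DIM('a)" "span B = UNIV"
    "N = {x. \<exists>k::'a \<Rightarrow> int. x = (\<Sum>b\<in>B. of_int (k b) *\<^sub>R b)}"
    using assms unfolding is_lattice_def by blast
  moreover have "independent B"
    using card_eq_dim[of B UNIV] calculation by (simp add: dim_UNIV)
  ultimately show ?thesis
    unfolding lattice_basis_def by blast
qed

locale fan_cone = lattice_basis B N for B :: "'a::euclidean_space set" and N +
  fixes R :: "real set" and \<Sigma> :: "'a set set" and \<sigma> :: "'a set"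
  assumes PID: "principal_ideal_subring R" and fan: "N_fan N \<Sigma>" and cone_in_fan: "\<sigma> \<in> \<Sigma>"
begin

abbreviation W :: "'a set" where "W \<equiv> Rspan R N"

lemma subring: "real_subring R"
  using PID unfolding principal_ideal_subring_def by blast

lemma fan_coneE:
  assumes "\<tau> \<in> \<Sigma>"
  obtains S where "finite S" "S \<subseteq> N" "\<tau> = conic_hull S" "sharp \<tau>"
  using assms fan unfolding N_fan_def N_cone_def by blast

lemma fan_face: "\<tau> \<in> \<Sigma> \<Longrightarrow> cone_face \<rho> \<tau> \<Longrightarrow> \<rho> \<in> \<Sigma>"
  using fan unfolding N_fan_def by blast

lemma fan_inter_face:
  "\<tau> \<in> \<Sigma> \<Longrightarrow> \<tau>' \<in> \<Sigma> \<Longrightarrow> cone_face (\<tau> \<inter> \<tau>') \<tau> \<and> cone_face (\<tau> \<inter> \<tau>') \<tau>'"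
  using fan unfolding N_fan_def by blast

lemma cone_rays_subset_fan_rays: "\<tau> \<in> \<Sigma> \<Longrightarrow> cone_rays \<tau> \<subseteq> fan_rays \<Sigma>"
  unfolding cone_rays_def fan_rays_def using fan_face by blast

lemma finite_cone_rays: "\<tau> \<in> \<Sigma> \<Longrightarrow> finite (cone_rays \<tau>)"
  using cone_rays_subset_fan_rays fan finite_subset
  unfolding N_fan_def fan_rays_def by (metis (no_types, lifting) mem_Collect_eq subset_iff)

lemma prim_gen_fan_ray:
  assumes "\<rho> \<in> fan_rays \<Sigma>"
  shows "is_primitive N \<rho> (prim_gen N \<rho>)" "ray_of (prim_gen N \<rho>) = \<rho>"
proof -
  have \<rho>: "\<rho> \<in> \<Sigma>" "is_ray \<rho>"
    using assms unfolding fan_rays_def by auto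
  obtain S where S: "S \<subseteq> N" "\<rho> = conic_hull S"
    using fan_coneE[OF \<rho>(1)] by blast
  obtain v where "v \<in> S" "v \<noteq> 0" "\<rho> = ray_of v"
    using ray_face_of_conic_hull[OF _ \<rho>(2)] cone_face_refl S(2) by metis
  then show "is_primitive N \<rho> (prim_gen N \<rho>)" "ray_of (prim_gen N \<rho>) = \<rho>"
    using prim_gen_ray_of S(1) by blast+
qed

lemma prim_gen_cone_ray:
  assumes "\<rho> \<in> cone_rays \<sigma>"
  shows "prim_gen N \<rho> \<in> N" "prim_gen N \<rho> \<in> \<rho>" "prim_gen N \<rho> \<noteq> 0" "ray_of (prim_gen N \<rho>) = \<rho>"
    "is_primitive N (ray_of (prim_gen N \<rho>)) (prim_gen N \<rho>)"
  using prim_gen_fan_ray cone_rays_subset_fan_rays[OF cone_in_fan] assms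
  unfolding is_primitive_def by blast+

lemma prim_gen_mem_W_fan: "\<rho> \<in> fan_rays \<Sigma> \<Longrightarrow> prim_gen N \<rho> \<in> W"
  using prim_gen_fan_ray(1) Rspan_inc[OF subring] unfolding is_primitive_def by blast

lemma prim_gen_mem_W: "\<rho> \<in> cone_rays \<sigma> \<Longrightarrow> prim_gen N \<rho> \<in> W"
  using prim_gen_mem_W_fan cone_rays_subset_fan_rays[OF cone_in_fan] by blast

lemma conic_hull_prim_gen: "conic_hull (prim_gen N ` cone_rays \<sigma>) = \<sigma>"
proof
  obtain S where S: "finite S" "\<sigma> = conic_hull S" "sharp \<sigma>"
    using fan_coneE[OF cone_in_fan] by blast
  have "prim_gen N ` cone_rays \<sigma> \<subseteq> \<sigma>"
    using prim_gen_cone_ray(2) cone_face_subset unfolding cone_rays_def by blast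
  then show "conic_hull (prim_gen N ` cone_rays \<sigma>) \<subseteq> \<sigma>"
    using conic_hull_subset_conic_hull[of "prim_gen N ` cone_rays \<sigma>" S] S(2) by simp
  obtain E where E: "0 \<notin> E" "conic_hull E = \<sigma>" "\<And>e. e \<in> E \<Longrightarrow> cone_face (ray_of e) \<sigma>"
    using conic_hull_ray_generators[OF S(1)] S(2,3) by metis
  have "E \<subseteq> conic_hull (prim_gen N ` cone_rays \<sigma>)"
  proof
    fix e assume e: "e \<in> E"
    have "e \<noteq> 0" using e E(1) by blast
    then have \<rho>: "ray_of e \<in> cone_rays \<sigma>"
      using E(3)[OF e] is_ray_ray_of unfolding cone_rays_def by blast
    then obtain c where c: "c \<ge> 0" "e = c *\<^sub>R prim_gen N (ray_of e)"
      using prim_gen_cone_ray(4)[OF \<rho>] ray_of_self by (metis ray_ofE)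
    have "prim_gen N (ray_of e) \<in> conic_hull (prim_gen N ` cone_rays \<sigma>)"
      using \<rho> by (intro conic_hull_inc) blast
    then show "e \<in> conic_hull (prim_gen N ` cone_rays \<sigma>)"
      by (subst c(2)) (rule conic_hull_scaleR[OF _ c(1)])
  qed
  then show "\<sigma> \<subseteq> conic_hull (prim_gen N ` cone_rays \<sigma>)"
    using conic_hull_subset_conic_hull E(2) by blast
qed

definition dual_to_rays :: bool where
  "dual_to_rays \<longleftrightarrow> (\<forall>\<rho>\<^sub>0\<in>cone_rays \<sigma>. \<exists>m\<in>dual_W R W.
      \<forall>\<rho>\<in>cone_rays \<sigma>. m (prim_gen N \<rho>) = (if \<rho> = \<rho>\<^sub>0 then 1 else 0))"

lemma dual_to_raysE:
  assumes "dual_to_rays"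
  obtains m where "\<And>\<rho>\<^sub>0. \<rho>\<^sub>0 \<in> cone_rays \<sigma> \<Longrightarrow> m \<rho>\<^sub>0 \<in> dual_W R W"
    "\<And>\<rho>\<^sub>0 \<rho>. \<rho>\<^sub>0 \<in> cone_rays \<sigma> \<Longrightarrow> \<rho> \<in> cone_rays \<sigma> \<Longrightarrow>
      m \<rho>\<^sub>0 (prim_gen N \<rho>) = (if \<rho> = \<rho>\<^sub>0 then 1 else 0)"
  using assms bchoice[of "cone_rays \<sigma>" "\<lambda>\<rho>\<^sub>0 m. m \<in> dual_W R W \<and>
      (\<forall>\<rho>\<in>cone_rays \<sigma>. m (prim_gen N \<rho>) = (if \<rho> = \<rho>\<^sub>0 then 1 else 0))"]
  unfolding dual_to_rays_def by blast

lemma dual_form_indicator: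
  assumes "dual_to_rays" "A \<subseteq> cone_rays \<sigma>"
  obtains m where "m \<in> dual_W R W"
    "\<And>\<rho>. \<rho> \<in> cone_rays \<sigma> \<Longrightarrow> m (prim_gen N \<rho>) = (if \<rho> \<in> A then 1 else 0)"
proof -
  obtain mf where mf: "\<And>\<rho>\<^sub>0. \<rho>\<^sub>0 \<in> cone_rays \<sigma> \<Longrightarrow> mf \<rho>\<^sub>0 \<in> dual_W R W"
    "\<And>\<rho>\<^sub>0 \<rho>. \<rho>\<^sub>0 \<in> cone_rays \<sigma> \<Longrightarrow> \<rho> \<in> cone_rays \<sigma> \<Longrightarrow>
      mf \<rho>\<^sub>0 (prim_gen N \<rho>) = (if \<rho> = \<rho>\<^sub>0 then 1 else 0)"
    using dual_to_raysE[OF assms(1)] by blast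
  have fin: "finite A"
    using finite_subset[OF assms(2) finite_cone_rays[OF cone_in_fan]] .
  show thesis
  proof (rule that)
    show "(\<lambda>x. \<Sum>\<rho>\<in>A. mf \<rho> x) \<in> dual_W R W"
      using mf(1) assms(2) by (intro dual_W_sum[OF subring]) auto
    fix \<rho> assume "\<rho> \<in> cone_rays \<sigma>"
    then show "(\<Sum>\<rho>'\<in>A. mf \<rho>' (prim_gen N \<rho>)) = (if \<rho> \<in> A then 1 else 0)"
      using mf(2) assms(2) fin by (simp add: subset_iff cong: sum.cong)
  qed
qed

end

context fan_cone
begin

lemma c_W_diff: "c_W N \<Sigma> (\<lambda>x. m x - m' x) = c_W N \<Sigma> m - c_W N \<Sigma> m'"
  by (auto simp: c_W_def fun_eq_iff)

lemma c_W_image_diff: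
  assumes "a \<in> c_W N \<Sigma> ` dual_W R W" "b \<in> c_W N \<Sigma> ` dual_W R W"
  shows "a - b \<in> c_W N \<Sigma> ` dual_W R W"
proof -
  obtain m m' where "m \<in> dual_W R W" "a = c_W N \<Sigma> m" "m' \<in> dual_W R W" "b = c_W N \<Sigma> m'"
    using assms by blast
  then show ?thesis
    using dual_W_diff[OF subring] c_W_diff by (intro image_eqI[of _ _ "\<lambda>x. m x - m' x"]) auto
qed

lemma zero_mem_c_W_image: "(\<lambda>_. 0) \<in> c_W N \<Sigma> ` dual_W R W"
proof -
  have "(\<lambda>x. 0) \<in> dual_W R W"
    using real_subring_0[OF subring] by (simp add: dual_WI linear_zero)
  moreover have "c_W N \<Sigma> (\<lambda>x. 0) = (\<lambda>_. 0)"
    by (simp add: c_W_def fun_eq_iff)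
  ultimately show ?thesis by (metis image_eqI)
qed

lemma a_W_eq:
  assumes "x - y \<in> c_W N \<Sigma> ` dual_W R W"
  shows "a_W R N \<Sigma> x = a_W R N \<Sigma> y"
proof -
  have "x - z \<in> c_W N \<Sigma> ` dual_W R W \<longleftrightarrow> y - z \<in> c_W N \<Sigma> ` dual_W R W" for z
  proof
    assume "x - z \<in> c_W N \<Sigma> ` dual_W R W"
    moreover have "y - z = (x - z) - (x - y)"
      by (simp add: fun_eq_iff)
    ultimately show "y - z \<in> c_W N \<Sigma> ` dual_W R W"
      using c_W_image_diff[OF _ assms, of "x - z"] by simp
  next
    assume "y - z \<in> c_W N \<Sigma> ` dual_W R W"
    moreover have "x - z = (y - z) - ((\<lambda>_. 0) - (x - y))"
      by (simp add: fun_eq_iff)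
    ultimately show "x - z \<in> c_W N \<Sigma> ` dual_W R W"
      using c_W_image_diff[OF _ c_W_image_diff[OF zero_mem_c_W_image assms], of "y - z"] by simp
  qed
  then show ?thesis unfolding a_W_def by simp
qed

lemma self_mem_a_W: "y \<in> R_Sigma1 R \<Sigma> \<Longrightarrow> y \<in> a_W R N \<Sigma> y"
  unfolding a_W_def using zero_mem_c_W_image by (simp add: fun_diff_def)

lemma dual_to_rays_if_A_W_sigma_eq:
  assumes "A_W_sigma R N \<Sigma> \<sigma> = A_W R N \<Sigma>"
  shows "dual_to_rays"
  unfolding dual_to_rays_def
proof
  fix \<rho>\<^sub>0 assume \<rho>\<^sub>0: "\<rho>\<^sub>0 \<in> cone_rays \<sigma>"
  define x where "x \<rho> = (if \<rho> = \<rho>\<^sub>0 then 1 else 0 :: real)" for \<rho>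
  have "x \<in> R_Sigma1 R \<Sigma>"
    using real_subring_0[OF subring] real_subring_1[OF subring] cone_rays_subset_fan_rays[OF cone_in_fan] \<rho>\<^sub>0
    unfolding R_Sigma1_def x_def by auto
  then have "a_W R N \<Sigma> x \<in> A_W_sigma R N \<Sigma> \<sigma>"
    using assms unfolding A_W_def by simp
  then obtain y where y: "y \<in> R_Sigma1 R \<Sigma>" "\<forall>\<rho>. \<rho> \<in> cone_rays \<sigma> \<longrightarrow> y \<rho> = 0"
    "a_W R N \<Sigma> x = a_W R N \<Sigma> y"
    unfolding A_W_sigma_def by blast
  then have "y \<in> a_W R N \<Sigma> x"
    using self_mem_a_W[OF y(1)] by simp
  then have "x - y \<in> c_W N \<Sigma> ` dual_W R W"
    unfolding a_W_def by simp
  then obtain m where m: "m \<in> dual_W R W" "x - y = c_W N \<Sigma> m"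
    by blast
  have "m (prim_gen N \<rho>) = (if \<rho> = \<rho>\<^sub>0 then 1 else 0)" if "\<rho> \<in> cone_rays \<sigma>" for \<rho>
    using fun_cong[OF m(2), of \<rho>] y(2) that cone_rays_subset_fan_rays[OF cone_in_fan]
    unfolding c_W_def x_def by auto
  then show "\<exists>m\<in>dual_W R W. \<forall>\<rho>\<in>cone_rays \<sigma>. m (prim_gen N \<rho>) = (if \<rho> = \<rho>\<^sub>0 then 1 else 0)"
    using m(1) by blast
qed

text \<open>Subtract from a representative the form taking its values on the rays of \<sigma>.\<close>
lemma A_W_sigma_eq_if_dual_to_rays:
  assumes "dual_to_rays"
  shows "A_W_sigma R N \<Sigma> \<sigma> = A_W R N \<Sigma>"
proof
  show "A_W_sigma R N \<Sigma> \<sigma> \<subseteq> A_W R N \<Sigma>"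
    unfolding A_W_sigma_def A_W_def by blast
  obtain mf where mf: "\<And>\<rho>\<^sub>0. \<rho>\<^sub>0 \<in> cone_rays \<sigma> \<Longrightarrow> mf \<rho>\<^sub>0 \<in> dual_W R W"
    "\<And>\<rho>\<^sub>0 \<rho>. \<rho>\<^sub>0 \<in> cone_rays \<sigma> \<Longrightarrow> \<rho> \<in> cone_rays \<sigma> \<Longrightarrow>
      mf \<rho>\<^sub>0 (prim_gen N \<rho>) = (if \<rho> = \<rho>\<^sub>0 then 1 else 0)"
    using dual_to_raysE[OF assms] by blast
  show "A_W R N \<Sigma> \<subseteq> A_W_sigma R N \<Sigma> \<sigma>"
  proof
    fix X assume "X \<in> A_W R N \<Sigma>"
    then obtain x where x: "x \<in> R_Sigma1 R \<Sigma>" "X = a_W R N \<Sigma> x"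
      unfolding A_W_def by blast
    define m where "m z = (\<Sum>\<rho>\<in>cone_rays \<sigma>. x \<rho> * mf \<rho> z)" for z
    have m_W: "m \<in> dual_W R W"
      unfolding m_def using x(1) mf(1)
      by (intro dual_W_sum[OF subring] dual_W_cmult[OF subring]) (auto simp: R_Sigma1_def)
    have m_rays: "m (prim_gen N \<rho>) = x \<rho>" if "\<rho> \<in> cone_rays \<sigma>" for \<rho>
    proof -
      have "m (prim_gen N \<rho>) = (\<Sum>\<rho>'\<in>cone_rays \<sigma>. if \<rho> = \<rho>' then x \<rho>' else 0)"
        unfolding m_def using mf(2) that by (intro sum.cong) auto
      then show ?thesis
        using finite_cone_rays[OF cone_in_fan] that by simp
    qed
    define y where "y = x - c_W N \<Sigma> m"
    have "y \<in> R_Sigma1 R \<Sigma>"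
      using x(1) dual_W_mem[OF m_W] prim_gen_mem_W_fan real_subring_diff[OF subring]
        real_subring_0[OF subring]
      unfolding y_def R_Sigma1_def c_W_def by auto
    moreover have "\<forall>\<rho>. \<rho> \<in> cone_rays \<sigma> \<longrightarrow> y \<rho> = 0"
      using m_rays cone_rays_subset_fan_rays[OF cone_in_fan] by (auto simp: y_def c_W_def)
    moreover have "a_W R N \<Sigma> x = a_W R N \<Sigma> y"
    proof (rule a_W_eq)
      have "x - y = c_W N \<Sigma> m"
        by (simp add: y_def fun_eq_iff)
      then show "x - y \<in> c_W N \<Sigma> ` dual_W R W"
        using m_W by simp
    qed
    ultimately show "X \<in> A_W_sigma R N \<Sigma> \<sigma>"
      unfolding A_W_sigma_def using x(2) by blast
  qed
qed

end

context fan_cone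
begin

definition proper_face_forms :: bool where
  "proper_face_forms \<longleftrightarrow> (\<forall>\<tau>. cone_face \<tau> \<sigma> \<and> \<tau> \<noteq> \<sigma> \<longrightarrow>
      (\<exists>u \<in> perp \<tau> \<inter> dual_W R W. \<forall>\<rho> \<in> cone_rays \<sigma> - cone_rays \<tau>. u (prim_gen N \<rho>) = 1))"

definition fan_cone_forms :: bool where
  "fan_cone_forms \<longleftrightarrow> (\<forall>\<tau>\<in>\<Sigma>. \<exists>u \<in> perp (\<sigma> \<inter> \<tau>) \<inter> dual_W R W.
      \<forall>\<rho> \<in> cone_rays \<sigma> - cone_rays \<tau>. u (prim_gen N \<rho>) = 1)"

lemma dual_to_rays_if_proper_face_forms:
  assumes "proper_face_forms"
  shows "dual_to_rays"
  unfolding dual_to_rays_def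
proof
  fix \<rho>\<^sub>0 assume \<rho>\<^sub>0: "\<rho>\<^sub>0 \<in> cone_rays \<sigma>"
  have \<rho>\<^sub>0_face: "cone_face \<rho>\<^sub>0 \<sigma>"
    using \<rho>\<^sub>0 unfolding cone_rays_def by blast
  obtain S where S: "finite S" "\<sigma> = conic_hull S" "sharp \<sigma>"
    using fan_coneE[OF cone_in_fan] by blast
  have "{0} \<noteq> \<sigma>"
    using prim_gen_cone_ray(2,3)[OF \<rho>\<^sub>0] cone_face_subset[OF \<rho>\<^sub>0_face] by blast
  moreover have "cone_face {0} \<sigma>"
    using cone_face_zero[OF S(1)] S(2,3) by simp
  ultimately have "\<exists>u \<in> perp {0} \<inter> dual_W R W.
      \<forall>\<rho> \<in> cone_rays \<sigma> - cone_rays {0}. u (prim_gen N \<rho>) = 1"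
    using assms[unfolded proper_face_forms_def, rule_format, OF conjI] by blast
  then obtain u\<^sub>0 where u\<^sub>0: "u\<^sub>0 \<in> dual_W R W" "\<forall>\<rho>\<in>cone_rays \<sigma>. u\<^sub>0 (prim_gen N \<rho>) = 1"
    unfolding cone_rays_zero by blast
  show "\<exists>m\<in>dual_W R W. \<forall>\<rho>\<in>cone_rays \<sigma>. m (prim_gen N \<rho>) = (if \<rho> = \<rho>\<^sub>0 then 1 else 0)"
  proof (cases "\<rho>\<^sub>0 = \<sigma>")
    case True
    have "\<rho> = \<rho>\<^sub>0" if "\<rho> \<in> cone_rays \<sigma>" for \<rho>
    proof (rule rays_eq_if_subset)
      show "is_ray \<rho>" "is_ray \<rho>\<^sub>0"
        using that \<rho>\<^sub>0 unfolding cone_rays_def by auto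
      show "\<rho> \<subseteq> \<rho>\<^sub>0"
        using that True cone_face_subset unfolding cone_rays_def by blast
    qed
    then show ?thesis using u\<^sub>0 by auto
  next
    case False
    then obtain u\<^sub>1 where u\<^sub>1: "u\<^sub>1 \<in> perp \<rho>\<^sub>0 \<inter> dual_W R W"
      "\<forall>\<rho>\<in>cone_rays \<sigma> - cone_rays \<rho>\<^sub>0. u\<^sub>1 (prim_gen N \<rho>) = 1"
      using assms \<rho>\<^sub>0_face unfolding proper_face_forms_def by blast
    have "\<rho> \<notin> cone_rays \<rho>\<^sub>0" if "\<rho> \<in> cone_rays \<sigma>" "\<rho> \<noteq> \<rho>\<^sub>0" for \<rho>
    proof
      assume "\<rho> \<in> cone_rays \<rho>\<^sub>0"
      then have "is_ray \<rho>" "\<rho> \<subseteq> \<rho>\<^sub>0"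
        using cone_face_subset unfolding cone_rays_def by auto
      moreover have "is_ray \<rho>\<^sub>0"
        using \<rho>\<^sub>0 unfolding cone_rays_def by blast
      ultimately show False
        using rays_eq_if_subset that(2) by blast
    qed
    moreover have "u\<^sub>1 (prim_gen N \<rho>\<^sub>0) = 0"
      using u\<^sub>1(1) prim_gen_cone_ray(2)[OF \<rho>\<^sub>0] unfolding perp_def by blast
    ultimately have "\<forall>\<rho>\<in>cone_rays \<sigma>. u\<^sub>0 (prim_gen N \<rho>) - u\<^sub>1 (prim_gen N \<rho>) =
        (if \<rho> = \<rho>\<^sub>0 then 1 else 0)"
      using u\<^sub>0(2) u\<^sub>1(2) by auto
    moreover have "(\<lambda>x. u\<^sub>0 x - u\<^sub>1 x) \<in> dual_W R W"
      using dual_W_diff[OF subring u\<^sub>0(1)] u\<^sub>1(1) by blast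
    ultimately show ?thesis
      by (intro bexI[of _ "\<lambda>x. u\<^sub>0 x - u\<^sub>1 x"])
  qed
qed

text \<open>The ray is a face of the face \<sigma> \<inter> \<tau> of \<tau>.\<close>
lemma cone_ray_in_face:
  assumes "\<tau> \<in> \<Sigma>" "\<rho> \<in> cone_rays \<sigma>" "\<rho> \<subseteq> \<tau>"
  shows "\<rho> \<in> cone_rays \<tau>"
proof -
  obtain H where H: "finite H" "\<tau> = conic_hull H"
    using fan_coneE[OF assms(1)] by blast
  have face: "cone_face \<rho> \<sigma>"
    using assms(2) unfolding cone_rays_def by blast
  then have "cone_face \<rho> (\<sigma> \<inter> \<tau>)"
    by (rule cone_face_of_subset) (use cone_face_subset[OF face] assms(3) in auto)
  then have "cone_face \<rho> \<tau>"
    using cone_face_trans[OF _ _ H(2,1)] fan_inter_face[OF cone_in_fan assms(1)] by blast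
  then show ?thesis using assms(2) unfolding cone_rays_def by blast
qed

lemma fan_cone_form_if_dual_to_rays:
  assumes "dual_to_rays" "\<tau> \<in> \<Sigma>"
  shows "\<exists>u \<in> perp (\<sigma> \<inter> \<tau>) \<inter> dual_W R W. \<forall>\<rho> \<in> cone_rays \<sigma> - cone_rays \<tau>. u (prim_gen N \<rho>) = 1"
proof -
  obtain m where m: "m \<in> dual_W R W"
    "\<And>\<rho>. \<rho> \<in> cone_rays \<sigma> \<Longrightarrow> m (prim_gen N \<rho>) = (if \<rho> \<in> cone_rays \<sigma> - cone_rays \<tau> then 1 else 0)"
    using dual_form_indicator[OF assms(1), of "cone_rays \<sigma> - cone_rays \<tau>"] by blast
  obtain w :: "'a \<Rightarrow> real" where w: "linear w" "\<forall>x\<in>\<sigma>. w x \<ge> 0" "\<sigma> \<inter> \<tau> = {x\<in>\<sigma>. w x = 0}"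
    using fan_inter_face[OF cone_in_fan assms(2)] unfolding cone_face_def by blast
  let ?G = "prim_gen N ` cone_rays \<sigma>"
  have inter_eq: "\<sigma> \<inter> \<tau> = conic_hull {g\<in>?G. w g = 0}"
    using w conic_hull_face_eq[OF w(1), of ?G] conic_hull_prim_gen by simp
  have m_zero: "m g = 0" if g: "g \<in> ?G" "w g = 0" for g
  proof -
    obtain \<rho> where \<rho>: "\<rho> \<in> cone_rays \<sigma>" "g = prim_gen N \<rho>"
      using g(1) by blast
    have "g \<in> \<sigma> \<inter> \<tau>"
      using g inter_eq conic_hull_inc[of g "{g\<in>?G. w g = 0}"] by blast
    then have "\<rho> \<subseteq> \<tau>"
      using ray_of_subset_conic_hull[of g "{g\<in>?G. w g = 0}"] inter_eq prim_gen_cone_ray(4)[OF \<rho>(1)] \<rho>(2)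
      by blast
    then show ?thesis
      using m(2)[OF \<rho>(1)] cone_ray_in_face[OF assms(2) \<rho>(1)] \<rho>(2) by simp
  qed
  have "m x = 0" if "x \<in> \<sigma> \<inter> \<tau>" for x
    by (rule linear_conic_hull_zero[OF dual_W_linear[OF m(1)] _ that[unfolded inter_eq]])
      (use m_zero in auto)
  then have "m \<in> perp (\<sigma> \<inter> \<tau>)"
    unfolding perp_def using dual_W_linear[OF m(1)] by blast
  then show ?thesis
    using m by (intro bexI[of _ m]) auto
qed

lemma proper_face_forms_if_fan_cone_forms: "fan_cone_forms \<Longrightarrow> proper_face_forms"
  unfolding proper_face_forms_def fan_cone_forms_def
  using fan_face[OF cone_in_fan] cone_face_subset by (metis inf.absorb_iff2)

lemma fan_cone_forms_if_dual_to_rays: "dual_to_rays \<Longrightarrow> fan_cone_forms"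
  unfolding fan_cone_forms_def using fan_cone_form_if_dual_to_rays by blast

end

lemma linear_form_vanishes_on_other_ray:
  fixes m :: "'a::real_vector \<Rightarrow> real"
  assumes "linear m" "\<And>s. s \<in> S \<Longrightarrow> s \<noteq> s\<^sub>0 \<Longrightarrow> m s = 0" "s\<^sub>0 \<noteq> 0"
    and \<rho>: "\<rho> \<in> cone_rays (conic_hull S)" "\<rho> \<noteq> ray_of s\<^sub>0" and "x \<in> \<rho>"
  shows "m x = 0"
proof -
  obtain w :: "'a \<Rightarrow> real" where w: "linear w" "\<forall>x\<in>conic_hull S. w x \<ge> 0"
    "\<rho> = {x\<in>conic_hull S. w x = 0}"
    using \<rho>(1) unfolding cone_rays_def cone_face_def by blast
  obtain q where q: "q \<noteq> 0" "\<rho> = ray_of q"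
    using \<rho>(1) unfolding cone_rays_def is_ray_iff by blast
  have "s\<^sub>0 \<notin> \<rho>"
    using \<rho>(2) ray_of_nonzero_mem[of s\<^sub>0 q] q assms(3) by auto
  have m_zero: "m s = 0" if s: "s \<in> {s\<in>S. w s = 0}" for s
  proof -
    have "s \<in> \<rho>"
      using s w(3) conic_hull_inc[of s S] by simp
    then show ?thesis
      using assms(2) s \<open>s\<^sub>0 \<notin> \<rho>\<close> by blast
  qed
  have "x \<in> conic_hull {s\<in>S. w s = 0}"
    using assms(6) unfolding w(3) conic_hull_face_eq[OF w(1,2)] .
  then show ?thesis
    using linear_conic_hull_zero[OF assms(1), of "{s\<in>S. w s = 0}"] m_zero by blast
qed

context fan_cone
begin

lemma dual_form_if_regular:
  assumes "W_regular R W \<sigma>" and \<rho>\<^sub>0: "\<rho>\<^sub>0 \<in> cone_rays \<sigma>"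
  shows "\<exists>m\<in>dual_W R W. \<forall>\<rho>\<in>cone_rays \<sigma>. m (prim_gen N \<rho>) = (if \<rho> = \<rho>\<^sub>0 then 1 else 0)"
proof -
  obtain S Bw where SB: "S \<subseteq> Bw" "R_basis R W Bw" "\<sigma> = conic_hull S"
    using assms(1) unfolding W_regular_def by blast
  obtain s\<^sub>0 where s\<^sub>0: "s\<^sub>0 \<in> S" "s\<^sub>0 \<noteq> 0" "\<rho>\<^sub>0 = ray_of s\<^sub>0"
    using ray_face_of_conic_hull[of \<rho>\<^sub>0 S] \<rho>\<^sub>0 SB(3) unfolding cone_rays_def by blast
  have s\<^sub>0_W: "s\<^sub>0 \<in> Bw" "s\<^sub>0 \<in> W"
    using s\<^sub>0(1) SB(1,2) unfolding R_basis_def by auto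
  obtain f where f: "\<And>x y. x \<in> W \<Longrightarrow> y \<in> W \<Longrightarrow> f (x + y) = f x + f y"
    "\<And>r x. r \<in> R \<Longrightarrow> x \<in> W \<Longrightarrow> f (r *\<^sub>R x) = r * f x" "\<And>x. x \<in> W \<Longrightarrow> f x \<in> R"
    "\<And>t. t \<in> Bw \<Longrightarrow> f t = (if t = s\<^sub>0 then 1 else 0)"
    using R_basis_coeff_form[OF subring SB(2) s\<^sub>0_W(1)] by blast
  obtain m where m: "linear m" "\<And>w. w \<in> W \<Longrightarrow> m w = f w"
    using R_linear_form_extends[OF subring f(1,2)] by blast
  have m_S: "m s = (if s = s\<^sub>0 then 1 else 0)" if "s \<in> S" for s
  proof -
    have "s \<in> Bw" "s \<in> W"
      using that SB(1,2) unfolding R_basis_def by auto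
    then show ?thesis using m(2) f(4) by simp
  qed
  define p\<^sub>0 where "p\<^sub>0 = prim_gen N \<rho>\<^sub>0"
  obtain c where c: "c \<ge> 0" "p\<^sub>0 = c *\<^sub>R s\<^sub>0"
    using prim_gen_cone_ray(2)[OF \<rho>\<^sub>0] s\<^sub>0(3) p\<^sub>0_def by (auto elim: ray_ofE)
  obtain l where l: "l \<in> dual_W R W" "l p\<^sub>0 = 1"
    using primitive_dual_form[OF subring prim_gen_cone_ray(5)[OF \<rho>\<^sub>0]] p\<^sub>0_def by blast
  have "c * l s\<^sub>0 = 1"
    using l c(2) linear_scale[OF dual_W_linear[OF l(1)]] by simp
  then have "l s\<^sub>0 = 1 / c"
    by (cases "c = 0") (auto simp: eq_divide_eq mult.commute)
  then have "1 / c \<in> R"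
    using dual_W_mem[OF l(1) s\<^sub>0_W(2)] by simp
  then have "(\<lambda>x. (1 / c) * m x) \<in> dual_W R W"
    using m f(3) by (intro dual_W_cmult[OF subring] dual_WI) auto
  moreover have "(1 / c) * m (prim_gen N \<rho>) = (if \<rho> = \<rho>\<^sub>0 then 1 else 0)"
    if "\<rho> \<in> cone_rays \<sigma>" for \<rho>
  proof (cases "\<rho> = \<rho>\<^sub>0")
    case True
    then show ?thesis
      using \<open>c * l s\<^sub>0 = 1\<close> c(2) m_S[OF s\<^sub>0(1)] linear_scale[OF m(1)] by (auto simp: p\<^sub>0_def)
  next
    case False
    have "m (prim_gen N \<rho>) = 0"
      by (rule linear_form_vanishes_on_other_ray[OF m(1) _ s\<^sub>0(2)])
        (use m_S that SB(3) s\<^sub>0(3) False prim_gen_cone_ray(2)[OF that] in auto)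
    then show ?thesis using False by simp
  qed
  ultimately show ?thesis
    by (intro bexI[of _ "\<lambda>x. (1 / c) * m x"]) auto
qed

lemma dual_to_rays_if_regular: "W_regular R W \<sigma> \<Longrightarrow> dual_to_rays"
  unfolding dual_to_rays_def using dual_form_if_regular by blast

lemma regular_if_dual_to_rays:
  assumes "dual_to_rays"
  shows "W_regular R W \<sigma>"
proof -
  obtain mf where mf: "\<And>\<rho>\<^sub>0. \<rho>\<^sub>0 \<in> cone_rays \<sigma> \<Longrightarrow> mf \<rho>\<^sub>0 \<in> dual_W R W"
    "\<And>\<rho>\<^sub>0 \<rho>. \<rho>\<^sub>0 \<in> cone_rays \<sigma> \<Longrightarrow> \<rho> \<in> cone_rays \<sigma> \<Longrightarrow>
      mf \<rho>\<^sub>0 (prim_gen N \<rho>) = (if \<rho> = \<rho>\<^sub>0 then 1 else 0)"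
    using dual_to_raysE[OF assms] by blast
  define K where "K = {w\<in>W. \<forall>\<rho>\<in>cone_rays \<sigma>. mf \<rho> w = 0}"
  have "R_submodule R K"
    unfolding K_def using mf(1) dual_W_linear
    by (intro R_submodule_kernel[OF R_submodule_Rspan[OF subring]]) blast
  moreover have "K \<subseteq> Rspan R B"
    using Rspan_lattice_subset[OF subring] by (auto simp: K_def)
  ultimately obtain C where "R_basis R K C"
    using free_R_submodule[OF PID order_refl] by blast
  then have "R_basis R W (prim_gen N ` cone_rays \<sigma> \<union> C)"
    unfolding K_def using mf dual_W_linear[OF mf(1)] dual_W_mem[OF mf(1)] prim_gen_mem_W
    by (intro R_basis_extend_dual_family[OF subring finite_cone_rays[OF cone_in_fan]
          R_submodule_Rspan[OF subring]]) auto
  then show ?thesis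
    unfolding W_regular_def using conic_hull_prim_gen by blast
qed

end

theorem proposition1p260:
  fixes R :: "real set" and N :: "'v::euclidean_space set"
    and \<Sigma> :: "'v set set" and \<sigma> :: "'v set"
  assumes "principal_ideal_subring R"
    and "is_lattice N"
    and "N_fan N \<Sigma>"
    and "\<sigma> \<in> \<Sigma>"
  defines "W \<equiv> Rspan R N"
  shows "(A_W_sigma R N \<Sigma> \<sigma> = A_W R N \<Sigma>
          \<longleftrightarrow> (\<forall>\<tau>. cone_face \<tau> \<sigma> \<and> \<tau> \<noteq> \<sigma> \<longrightarrow>
                (\<exists>u \<in> perp \<tau> \<inter> dual_W R W.
                   \<forall>\<rho> \<in> cone_rays \<sigma> - cone_rays \<tau>. u (prim_gen N \<rho>) = 1)))
       \<and> ((\<forall>\<tau>. cone_face \<tau> \<sigma> \<and> \<tau> \<noteq> \<sigma> \<longrightarrow>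
                (\<exists>u \<in> perp \<tau> \<inter> dual_W R W.
                   \<forall>\<rho> \<in> cone_rays \<sigma> - cone_rays \<tau>. u (prim_gen N \<rho>) = 1))
          \<longleftrightarrow> (\<forall>\<tau>\<in>\<Sigma>. \<exists>u \<in> perp (\<sigma> \<inter> \<tau>) \<inter> dual_W R W.
                   \<forall>\<rho> \<in> cone_rays \<sigma> - cone_rays \<tau>. u (prim_gen N \<rho>) = 1))
       \<and> ((\<forall>\<tau>\<in>\<Sigma>. \<exists>u \<in> perp (\<sigma> \<inter> \<tau>) \<inter> dual_W R W.
                   \<forall>\<rho> \<in> cone_rays \<sigma> - cone_rays \<tau>. u (prim_gen N \<rho>) = 1)
          \<longleftrightarrow> W_regular R W \<sigma>)"
proof -
  obtain B where "lattice_basis B N"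
    using lattice_basis_exists[OF assms(2)] by blast
  then interpret fan_cone B N R \<Sigma> \<sigma>
    using assms(1,3,4) by (simp add: fan_cone_def fan_cone_axioms_def)
  have "A_W_sigma R N \<Sigma> \<sigma> = A_W R N \<Sigma> \<longleftrightarrow> dual_to_rays"
    using dual_to_rays_if_A_W_sigma_eq A_W_sigma_eq_if_dual_to_rays by blast
  moreover have "proper_face_forms \<longleftrightarrow> dual_to_rays" "fan_cone_forms \<longleftrightarrow> dual_to_rays"
    using dual_to_rays_if_proper_face_forms proper_face_forms_if_fan_cone_forms
      fan_cone_forms_if_dual_to_rays by blast+
  moreover have "W_regular R (Rspan R N) \<sigma> \<longleftrightarrow> dual_to_rays"
    using regular_if_dual_to_rays dual_to_rays_if_regular by blast
  ultimately show ?thesis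
    unfolding W_def proper_face_forms_def[symmetric] fan_cone_forms_def[symmetric] by simp
qed

end
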